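(* For a bigraph $X$, the map $C(X^{K_2})\to C(X^L)$ induced by the canonical inclusion $X^{K_2}=X^{L_{0,1}}\to X^L$ is a homotopy equivalence.
   Context: A graph is a set $V$ with a symmetric relation $E\subset V\times V$ (loops allowed). $K_2$ has vertices $0,1$ and edges $(0,1),(1,0)$. A bigraph is a graph $X$ with a graph homomorphism $\varepsilon_X:X\to K_2$; $V_i(X)=\varepsilon_X^{-1}(i)$. For integers $a\le b$, $L_{a,b}$ is the bigraph with vertices $\{a,\dots,b\}$, edges $\{(s,t):|s-t|=1\}$ and coloring $s\mapsto s\bmod 2$; so $L_{0,1}=K_2$. For bigraphs $X,Y$, $Y^X$ is the graph whose vertices are maps $h:V(X)\to V(Y)$ with $\varepsilon_Y\circ h=\varepsilon_X$, with $h,h'$ adjacent iff $(h(s),h'(t))\in E(Y)$ for all $(s,t)\in E(X)$. Let $r_n:L_{-n-1,n+2}\to L_{-n,n+1}$ be the retraction which is the identity on $L_{-n,n+1}$ and sends $-n-1\mapsto -n+1$, $n+2\mapsto n$. $X^L$ is the colimit (in graphs) of the sequence $X^{L_{0,1}}\xrightarrow{r_0^*}X^{L_{-1,2}}\xrightarrow{r_1^*}\cdots\xrightarrow{}X^{L_{-n,n+1}}\xrightarrow{r_n^*}\cdots$, where $r_n^*(h)=h\circ r_n$. For a graph $G$, $C(G)$ is the poset of finite nonempty $\sigma\subset V(G)$ with $\sigma\times\sigma\subset E(G)$, ordered by inclusion; a graph homomorphism $h$ induces $\sigma\mapsto h(\sigma)$. Posets are regarded as spaces via geometric realizations of order complexes.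 *)

theory Defs
  imports "HOL-Analysis.Analysis"
begin

definition is_graph :: "'a set \<Rightarrow> ('a \<times> 'a) set \<Rightarrow> bool" where
  "is_graph V E \<longleftrightarrow> E \<subseteq> V \<times> V \<and> sym E"

definition is_bigraph :: "'a set \<Rightarrow> ('a \<times> 'a) set \<Rightarrow> ('a \<Rightarrow> int) \<Rightarrow> bool" where
  "is_bigraph V E eps \<longleftrightarrow> is_graph V E \<and> eps ` V \<subseteq> {0,1}
     \<and> (\<forall>(x,y)\<in>E. (eps x, eps y) \<in> {(0,1),(1,0)})"

definition hom_verts :: "'b set \<Rightarrow> ('b \<Rightarrow> int) \<Rightarrow> 'a set \<Rightarrow> ('a \<Rightarrow> int) \<Rightarrow> ('b \<Rightarrow> 'a) set" where
  "hom_verts VX epsX VY epsY =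
     {h. h \<in> extensional VX \<and> h ` VX \<subseteq> VY \<and> (\<forall>s\<in>VX. epsY (h s) = epsX s)}"

definition hom_edges :: "'b set \<Rightarrow> ('b \<times> 'b) set \<Rightarrow> ('b \<Rightarrow> int) \<Rightarrow>
    'a set \<Rightarrow> ('a \<times> 'a) set \<Rightarrow> ('a \<Rightarrow> int) \<Rightarrow> (('b \<Rightarrow> 'a) \<times> ('b \<Rightarrow> 'a)) set" where
  "hom_edges VX EdX epsX VY EdY epsY =
     {(h,h'). h \<in> hom_verts VX epsX VY epsY \<and> h' \<in> hom_verts VX epsX VY epsY
        \<and> (\<forall>(s,t)\<in>EdX. (h s, h' t) \<in> EdY)}"

definition L_verts :: "int \<Rightarrow> int \<Rightarrow> int set" where
  "L_verts a b = {a..b}"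

definition L_edges :: "int \<Rightarrow> int \<Rightarrow> (int \<times> int) set" where
  "L_edges a b = {(s,t). s \<in> {a..b} \<and> t \<in> {a..b} \<and> \<bar>s - t\<bar> = 1}"

definition L_eps :: "int \<Rightarrow> int" where
  "L_eps s = s mod 2"

definition XLn_verts :: "'a set \<Rightarrow> ('a \<Rightarrow> int) \<Rightarrow> nat \<Rightarrow> (int \<Rightarrow> 'a) set" where
  "XLn_verts V eps n = hom_verts (L_verts (- int n) (int n + 1)) L_eps V eps"

definition XLn_edges :: "'a set \<Rightarrow> ('a \<times> 'a) set \<Rightarrow> ('a \<Rightarrow> int) \<Rightarrow> nat \<Rightarrow> ((int \<Rightarrow> 'a) \<times> (int \<Rightarrow> 'a)) set" where
  "XLn_edges V E eps n =
     hom_edges (L_verts (- int n) (int n + 1)) (L_edges (- int n) (int n + 1)) L_eps V E eps"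

definition retr :: "nat \<Rightarrow> int \<Rightarrow> int" where
  "retr n s = (if s = - int n - 1 then - int n + 1 else if s = int n + 2 then int n else s)"

definition retr_star :: "nat \<Rightarrow> (int \<Rightarrow> 'a) \<Rightarrow> (int \<Rightarrow> 'a)" where
  "retr_star n h = restrict (h \<circ> retr n) (L_verts (- int n - 1) (int n + 2))"

fun lift :: "nat \<Rightarrow> nat \<Rightarrow> (int \<Rightarrow> 'a) \<Rightarrow> (int \<Rightarrow> 'a)" where
  "lift n 0 h = h"
| "lift n (Suc d) h = retr_star (n + d) (lift n d h)"

text \<open>Vertices: the colimit of the vertex sets, i.e. the disjoint union of the stages
  modulo the relation identifying elements that become equal at some later stage.
  Edges: the images of the edges of the stages (the smallest relation making the
  cocone maps homomorphisms).\<close>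

definition XL_rel :: "'a set \<Rightarrow> ('a \<Rightarrow> int) \<Rightarrow> ((nat \<times> (int \<Rightarrow> 'a)) \<times> (nat \<times> (int \<Rightarrow> 'a))) set" where
  "XL_rel V eps = {((n,h),(m,h')). h \<in> XLn_verts V eps n \<and> h' \<in> XLn_verts V eps m
      \<and> (\<exists>k. n \<le> k \<and> m \<le> k \<and> lift n (k - n) h = lift m (k - m) h')}"

definition XL_verts :: "'a set \<Rightarrow> ('a \<Rightarrow> int) \<Rightarrow> (nat \<times> (int \<Rightarrow> 'a)) set set" where
  "XL_verts V eps = (SIGMA n:UNIV. XLn_verts V eps n) // XL_rel V eps"

definition XL_edges :: "'a set \<Rightarrow> ('a \<times> 'a) set \<Rightarrow> ('a \<Rightarrow> int) \<Rightarrow>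
    ((nat \<times> (int \<Rightarrow> 'a)) set \<times> (nat \<times> (int \<Rightarrow> 'a)) set) set" where
  "XL_edges V E eps = {(A,B). A \<in> XL_verts V eps \<and> B \<in> XL_verts V eps \<and>
      (\<exists>n h h'. (n,h) \<in> A \<and> (n,h') \<in> B \<and> (h,h') \<in> XLn_edges V E eps n)}"

definition XL_incl :: "'a set \<Rightarrow> ('a \<Rightarrow> int) \<Rightarrow> (int \<Rightarrow> 'a) \<Rightarrow> (nat \<times> (int \<Rightarrow> 'a)) set" where
  "XL_incl V eps h = XL_rel V eps `` {(0, h)}"

definition cliques :: "'a set \<Rightarrow> ('a \<times> 'a) set \<Rightarrow> 'a set set" where
  "cliques V E = {\<sigma>. finite \<sigma> \<and> \<sigma> \<noteq> {} \<and> \<sigma> \<subseteq> V \<and> \<sigma> \<times> \<sigma> \<subseteq> E}"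

definition order_complex :: "'p set \<Rightarrow> ('p \<Rightarrow> 'p \<Rightarrow> bool) \<Rightarrow> 'p set set" where
  "order_complex P le = {S. finite S \<and> S \<noteq> {} \<and> S \<subseteq> P \<and> (\<forall>x\<in>S. \<forall>y\<in>S. le x y \<or> le y x)}"

definition simplex_pts :: "'v set \<Rightarrow> ('v \<Rightarrow> real) set" where
  "simplex_pts S = {t. (\<forall>v. 0 \<le> t v) \<and> (\<forall>v. v \<notin> S \<longrightarrow> t v = 0) \<and> sum t S = 1}"

definition geom_real :: "'v set set \<Rightarrow> ('v \<Rightarrow> real) topology" where
  "geom_real K = topology (\<lambda>U. U \<subseteq> (\<Union>S\<in>K. simplex_pts S) \<and>
      (\<forall>S\<in>K. openin (subtopology (powertop_real UNIV) (simplex_pts S)) (U \<inter> simplex_pts S)))"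

definition poset_real :: "'p set \<Rightarrow> ('p \<Rightarrow> 'p \<Rightarrow> bool) \<Rightarrow> ('p \<Rightarrow> real) topology" where
  "poset_real P le = geom_real (order_complex P le)"

definition real_map :: "('p \<Rightarrow> 'q) \<Rightarrow> ('p \<Rightarrow> real) \<Rightarrow> ('q \<Rightarrow> real)" where
  "real_map \<phi> t = (\<lambda>q. sum t {p. t p \<noteq> 0 \<and> \<phi> p = q})"

definition homotopy_equivalence_map :: "'a topology \<Rightarrow> 'b topology \<Rightarrow> ('a \<Rightarrow> 'b) \<Rightarrow> bool" where
  "homotopy_equivalence_map X Y f \<longleftrightarrow> continuous_map X Y f \<and>
     (\<exists>g. continuous_map Y X g \<and>
          homotopic_with (\<lambda>x. True) X X (g \<circ> f) id \<and>
          homotopic_with (\<lambda>x. True) Y Y (f \<circ> g) id)"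

end

theory Submission
  imports Defs
begin

text \<open>
  A vertex of X^L is represented by a parity preserving map \<int> \<rightarrow> V(X) that factors through the
  zigzag retraction of \<int> onto some L_{-n,n+1}. Restriction to {0,1} is a monotone map \<psi> from the
  clique poset of X^L to that of X^(K_2) with \<psi> \<circ> \<phi> = id, while \<phi> \<circ> \<psi> is the truncation c_0 to
  stage 0. The truncations c_N and c_{N+1} both lie below the monotone map c_N \<union> c_{N+1}, and
  comparable monotone maps have homotopic realizations. On each simplex c_N is eventually the
  identity, so running the homotopies c_N \<simeq> c_N \<union> c_{N+1} \<simeq> c_{N+1} on the time intervals
  [1 - 2^-k, 1 - 2^-(k+1)] gives a homotopy from c_0 to the identity that is continuous in the
  weak topology.
\<close>

section \<open>Geometric realizations\<close>

lemma istopology_geom_real: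
  fixes K :: "'v set set"
  shows "istopology (\<lambda>U. U \<subseteq> (\<Union>S\<in>K. simplex_pts S) \<and>
      (\<forall>S\<in>K. openin (subtopology (powertop_real UNIV) (simplex_pts S)) (U \<inter> simplex_pts S)))"
  unfolding istopology_def
proof (intro conjI allI impI ballI)
  fix U V :: "('v \<Rightarrow> real) set"
  assume u: "U \<subseteq> (\<Union>S\<in>K. simplex_pts S) \<and> (\<forall>S\<in>K. openin (subtopology (powertop_real UNIV) (simplex_pts S)) (U \<inter> simplex_pts S))"
    and v: "V \<subseteq> (\<Union>S\<in>K. simplex_pts S) \<and> (\<forall>S\<in>K. openin (subtopology (powertop_real UNIV) (simplex_pts S)) (V \<inter> simplex_pts S))"
  show "U \<inter> V \<subseteq> (\<Union>S\<in>K. simplex_pts S)" using u by blast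
  fix S assume "S \<in> K"
  then have "openin (subtopology (powertop_real UNIV) (simplex_pts S)) ((U \<inter> simplex_pts S) \<inter> (V \<inter> simplex_pts S))"
    using u v by (meson openin_Int)
  then show "openin (subtopology (powertop_real UNIV) (simplex_pts S)) (U \<inter> V \<inter> simplex_pts S)"
    by (simp add: Int_ac)
next
  fix \<K> :: "('v \<Rightarrow> real) set set"
  assume k: "\<forall>U\<in>\<K>. U \<subseteq> (\<Union>S\<in>K. simplex_pts S) \<and> (\<forall>S\<in>K. openin (subtopology (powertop_real UNIV) (simplex_pts S)) (U \<inter> simplex_pts S))"
  show "\<Union>\<K> \<subseteq> (\<Union>S\<in>K. simplex_pts S)" using k by blast
  fix S assume S: "S \<in> K"
  have "openin (subtopology (powertop_real UNIV) (simplex_pts S)) (\<Union>U\<in>\<K>. U \<inter> simplex_pts S)"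
  proof (rule openin_Union)
    fix W assume "W \<in> (\<lambda>U. U \<inter> simplex_pts S) ` \<K>"
    then show "openin (subtopology (powertop_real UNIV) (simplex_pts S)) W" using k S by blast
  qed
  then show "openin (subtopology (powertop_real UNIV) (simplex_pts S)) (\<Union>\<K> \<inter> simplex_pts S)"
    by (simp only: Int_Union2)
qed

lemma openin_geom_real:
  "openin (geom_real K) U \<longleftrightarrow> U \<subseteq> (\<Union>S\<in>K. simplex_pts S) \<and>
      (\<forall>S\<in>K. openin (subtopology (powertop_real UNIV) (simplex_pts S)) (U \<inter> simplex_pts S))"
  unfolding geom_real_def by (simp only: topology_inverse'[OF istopology_geom_real])

lemma topspace_geom_real: "topspace (geom_real K) = (\<Union>S\<in>K. simplex_pts S)"
proof -
  have "openin (geom_real K) (\<Union>S\<in>K. simplex_pts S)"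
    unfolding openin_geom_real
  proof (intro conjI ballI)
    fix S assume "S \<in> K"
    then have "(\<Union>S\<in>K. simplex_pts S) \<inter> simplex_pts S = topspace (subtopology (powertop_real UNIV) (simplex_pts S))"
      by auto
    then show "openin (subtopology (powertop_real UNIV) (simplex_pts S)) ((\<Union>S\<in>K. simplex_pts S) \<inter> simplex_pts S)"
      by (metis openin_topspace)
  qed auto
  then have "(\<Union>S\<in>K. simplex_pts S) \<subseteq> topspace (geom_real K)"
    by (rule openin_subset)
  moreover have "topspace (geom_real K) \<subseteq> (\<Union>S\<in>K. simplex_pts S)"
    using openin_topspace[of "geom_real K"] unfolding openin_geom_real by blast
  ultimately show ?thesis by blast
qed

lemma continuous_map_simplex_inclusion:
  assumes "S \<in> K"
  shows "continuous_map (subtopology (powertop_real UNIV) (simplex_pts S)) (geom_real K) id"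
  unfolding continuous_map_def
proof (intro conjI allI impI)
  show "id \<in> topspace (subtopology (powertop_real UNIV) (simplex_pts S)) \<rightarrow> topspace (geom_real K)"
    using assms by (auto simp: topspace_geom_real)
  fix U assume "openin (geom_real K) U"
  then have "openin (subtopology (powertop_real UNIV) (simplex_pts S)) (U \<inter> simplex_pts S)"
    using assms by (auto simp: openin_geom_real)
  moreover have "{x \<in> topspace (subtopology (powertop_real UNIV) (simplex_pts S)). id x \<in> U} = U \<inter> simplex_pts S"
    by auto
  ultimately show "openin (subtopology (powertop_real UNIV) (simplex_pts S))
          {x \<in> topspace (subtopology (powertop_real UNIV) (simplex_pts S)). id x \<in> U}" by simp
qed

lemma closedin_simplex_pts:
  fixes S :: "'v set"
  assumes "finite S"
  shows "closedin (powertop_real UNIV) (simplex_pts S)"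
proof -
  have c1: "closedin (powertop_real UNIV) {t. 0 \<le> t v}" for v :: 'v
    using closedin_continuous_map_preimage[OF continuous_map_product_projection[of v UNIV "\<lambda>_. euclideanreal"], of "{0..}"]
    by simp
  have c2: "closedin (powertop_real UNIV) {t. t v \<in> {0}}" for v :: 'v
    using closedin_continuous_map_preimage[OF continuous_map_product_projection[of v UNIV "\<lambda>_. euclideanreal"], of "{0}"]
    by simp
  have cs: "continuous_map (powertop_real UNIV) euclideanreal (\<lambda>t. sum t S)"
    using assms by (intro continuous_map_sum continuous_map_product_projection) auto
  have c3: "closedin (powertop_real UNIV) {t. sum t S \<in> {1}}"
    using closedin_continuous_map_preimage[OF cs, of "{1}"] by simp
  define D where "D v = (if v \<in> S then UNIV else {t::'v\<Rightarrow>real. t v \<in> {0}})" for v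
  have c4: "closedin (powertop_real UNIV) (D v)" for v
    using c2 closedin_topspace[of "powertop_real (UNIV::'v set)"] by (simp add: D_def)
  have eq: "simplex_pts S = (\<Inter>v. {t. 0 \<le> t v} \<inter> D v) \<inter> {t. sum t S \<in> {1}}"
    unfolding simplex_pts_def D_def by (auto split: if_splits)
  have "closedin (powertop_real UNIV) (\<Inter>v. {t. 0 \<le> t v} \<inter> D v)"
    by (rule closedin_Inter) (auto intro!: closedin_Int c1 c4)
  then show ?thesis unfolding eq
    by (intro closedin_Int c3)
qed

lemma continuous_map_into_geom_real:
  assumes f: "continuous_map Z (powertop_real UNIV) f" and fin: "finite \<T>" and TK: "\<T> \<subseteq> K"
    and finT: "\<And>T. T \<in> \<T> \<Longrightarrow> finite T"
    and im: "\<And>z. z \<in> topspace Z \<Longrightarrow> f z \<in> (\<Union>T\<in>\<T>. simplex_pts T)"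
  shows "continuous_map Z (geom_real K) f"
  unfolding continuous_map_def
proof (intro conjI allI impI)
  show "f \<in> topspace Z \<rightarrow> topspace (geom_real K)"
    using im TK unfolding topspace_geom_real by blast
  fix U assume U: "openin (geom_real K) U"
  define C where "C = (\<Union>T\<in>\<T>. simplex_pts T - U)"
  have cl: "closedin (powertop_real UNIV) (simplex_pts T - U)" if T: "T \<in> \<T>" for T
  proof -
    have "openin (subtopology (powertop_real UNIV) (simplex_pts T)) (U \<inter> simplex_pts T)"
      using U T TK unfolding openin_geom_real by blast
    then have "closedin (subtopology (powertop_real UNIV) (simplex_pts T)) (simplex_pts T - (U \<inter> simplex_pts T))"
      using closedin_diff[OF closedin_topspace, of "subtopology (powertop_real UNIV) (simplex_pts T)"]
      by simp
    moreover have "simplex_pts T - (U \<inter> simplex_pts T) = simplex_pts T - U" by blast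
    ultimately have "closedin (subtopology (powertop_real UNIV) (simplex_pts T)) (simplex_pts T - U)"
      by simp
    then show ?thesis using closedin_trans_full closedin_simplex_pts finT T by blast
  qed
  have "closedin (powertop_real UNIV) C"
    unfolding C_def using fin cl by (intro closedin_Union) auto
  then have "openin (powertop_real UNIV) (UNIV - C)"
    using openin_diff[OF openin_topspace[of "powertop_real UNIV"]] by simp
  then have "openin Z {z \<in> topspace Z. f z \<in> UNIV - C}"
    by (rule openin_continuous_map_preimage[OF f])
  moreover have "{z \<in> topspace Z. f z \<in> UNIV - C} = {z \<in> topspace Z. f z \<in> U}"
    using im unfolding C_def by blast
  ultimately show "openin Z {z \<in> topspace Z. f z \<in> U}" by simp
qed

lemma quotient_map_sum_simplices:
  "quotient_map (sum_topology (\<lambda>S. subtopology (powertop_real UNIV) (simplex_pts S)) K) (geom_real K) snd"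
  unfolding quotient_map_def
proof (intro conjI allI impI)
  show "snd ` topspace (sum_topology (\<lambda>S. subtopology (powertop_real UNIV) (simplex_pts S)) K) = topspace (geom_real K)"
    unfolding topspace_geom_real topspace_sum_topology by force
  fix U :: "('a \<Rightarrow> real) set" assume U: "U \<subseteq> topspace (geom_real K)"
  have eq: "{x. (S, x) \<in> {x \<in> topspace (sum_topology (\<lambda>S. subtopology (powertop_real UNIV) (simplex_pts S)) K). snd x \<in> U}}
      = U \<inter> simplex_pts S" if "S \<in> K" for S
    using that by auto
  have sub: "{x \<in> topspace (sum_topology (\<lambda>S. subtopology (powertop_real UNIV) (simplex_pts S)) K). snd x \<in> U}
     \<subseteq> Sigma K (topspace \<circ> (\<lambda>S. subtopology (powertop_real UNIV) (simplex_pts S)))" by auto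
  have U': "U \<subseteq> (\<Union>S\<in>K. simplex_pts S)" using U by (simp add: topspace_geom_real)
  show "openin (sum_topology (\<lambda>S. subtopology (powertop_real UNIV) (simplex_pts S)) K)
          {x \<in> topspace (sum_topology (\<lambda>S. subtopology (powertop_real UNIV) (simplex_pts S)) K). snd x \<in> U} =
        openin (geom_real K) U"
    unfolding openin_sum_topology openin_geom_real using sub U' eq by simp
qed

lemma continuous_map_prod_sum_topology:
  assumes h: "\<And>i. i \<in> I \<Longrightarrow> continuous_map (prod_topology T (X i)) Y (\<lambda>(x,y). h (x,(i,y)))"
  shows "continuous_map (prod_topology T (sum_topology X I)) Y h"
  unfolding continuous_map_def
proof (intro conjI allI impI)
  show "h \<in> topspace (prod_topology T (sum_topology X I)) \<rightarrow> topspace Y"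
  proof
    fix p assume "p \<in> topspace (prod_topology T (sum_topology X I))"
    then obtain x i y where p: "p = (x,(i,y))" "i \<in> I" "(x,y) \<in> topspace (prod_topology T (X i))"
      by auto
    have "(\<lambda>(x,y). h (x,(i,y))) (x,y) \<in> topspace Y"
      by (rule funcset_mem[OF continuous_map_funspace[OF h[OF p(2)]] p(3)])
    then show "h p \<in> topspace Y"
      using p(1) by simp
  qed
  fix W assume W: "openin Y W"
  show "openin (prod_topology T (sum_topology X I)) {p \<in> topspace (prod_topology T (sum_topology X I)). h p \<in> W}"
    unfolding openin_prod_topology_alt
  proof (intro allI impI)
    fix x z assume "(x, z) \<in> {p \<in> topspace (prod_topology T (sum_topology X I)). h p \<in> W}"
    then obtain i y where z: "z = (i,y)" "i \<in> I" "y \<in> topspace (X i)" and x: "x \<in> topspace T"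
      and hW: "h (x,(i,y)) \<in> W"
      by auto
    define Ob where "Ob = {p \<in> topspace (prod_topology T (X i)). (\<lambda>(x,y). h (x,(i,y))) p \<in> W}"
    have "openin (prod_topology T (X i)) Ob"
      unfolding Ob_def by (rule openin_continuous_map_preimage[OF h[OF z(2)] W])
    moreover have "(x,y) \<in> Ob"
      using x z hW by (simp add: Ob_def)
    ultimately obtain U V where UV: "openin T U" "openin (X i) V" "x \<in> U" "y \<in> V" and sub: "U \<times> V \<subseteq> Ob"
      by (metis openin_prod_topology_alt)
    have "openin (sum_topology X I) (Pair i ` V)"
      using open_map_component_injection[OF z(2), where X = X] UV(2) unfolding open_map_def by blast
    moreover have "U \<times> Pair i ` V \<subseteq> {p \<in> topspace (prod_topology T (sum_topology X I)). h p \<in> W}"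
    proof
      fix p assume "p \<in> U \<times> Pair i ` V"
      then obtain a b where "p = (a,(i,b))" "(a,b) \<in> Ob" using sub by blast
      then show "p \<in> {p \<in> topspace (prod_topology T (sum_topology X I)). h p \<in> W}"
        using z(2) by (simp add: Ob_def)
    qed
    ultimately show "\<exists>U V. openin T U \<and> openin (sum_topology X I) V \<and> x \<in> U \<and> z \<in> V \<and>
        U \<times> V \<subseteq> {p \<in> topspace (prod_topology T (sum_topology X I)). h p \<in> W}"
      using UV z by blast
  qed
qed

lemma continuous_map_interval_times_geom_real:
  fixes h :: "real \<times> ('v \<Rightarrow> real) \<Rightarrow> 'b"
  assumes hS: "\<And>S. S \<in> K \<Longrightarrow>
    continuous_map (prod_topology (top_of_set {0..1}) (subtopology (powertop_real UNIV) (simplex_pts S))) Y h"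
  shows "continuous_map (prod_topology (top_of_set {0..1}) (geom_real K)) Y h"
proof -
  let ?Z = "sum_topology (\<lambda>S. subtopology (powertop_real UNIV) (simplex_pts S)) K"
  have "quotient_map (prod_topology (top_of_set {0..1::real}) ?Z) (prod_topology (top_of_set {0..1}) (geom_real K))
      (\<lambda>(x,y). (x, snd y))"
    by (rule quotient_map_prod_right[OF _ _ quotient_map_sum_simplices])
      (simp_all add: compact_imp_locally_compact_space compact_space_subtopology Hausdorff_space_subtopology)
  moreover have "continuous_map (prod_topology (top_of_set {0..1::real}) ?Z) Y (h \<circ> (\<lambda>(x,y). (x, snd y)))"
    by (rule continuous_map_prod_sum_topology) (use hS in \<open>simp add: case_prod_unfold\<close>)
  ultimately show ?thesis
    by (rule continuous_compose_quotient_map)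
qed
section \<open>Infinite concatenation of homotopies\<close>

definition dyadic_time :: "nat \<Rightarrow> real" where "dyadic_time n = 1 - 1 / 2 ^ n"

lemma dyadic_time_mono: "n \<le> m \<Longrightarrow> dyadic_time n \<le> dyadic_time m"
  unfolding dyadic_time_def by (simp add: frac_le)

lemma dyadic_time_less_Suc: "dyadic_time n < dyadic_time (Suc n)"
  unfolding dyadic_time_def by (simp add: field_simps)

lemma dyadic_time_0 [simp]: "dyadic_time 0 = 0" by (simp add: dyadic_time_def)

lemma dyadic_time_less_1: "dyadic_time n < 1" by (simp add: dyadic_time_def)

lemma dyadic_time_exceeds: "l < 1 \<Longrightarrow> \<exists>n. l \<le> dyadic_time n"
proof -
  assume "l < 1"
  then obtain n where "(1/2::real)^n < 1 - l" using real_arch_pow_inv[of "1 - l" "1/2"] by auto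
  then have "l \<le> dyadic_time n" by (simp add: dyadic_time_def power_one_over)
  then show ?thesis by blast
qed

lemma dyadic_time_Suc_diff: "(dyadic_time (Suc n) - dyadic_time n) * 2 ^ (Suc n) = 1"
  unfolding dyadic_time_def by (simp add: field_simps)

text \<open>\<open>concat_homotopies h n\<close> runs \<open>h k\<close> on the time interval \<open>[dyadic_time k, dyadic_time (Suc k)]\<close>
  for \<open>k \<le> n\<close> and then stays at the end of \<open>h n\<close>.\<close>

primrec concat_homotopies :: "(nat \<Rightarrow> real \<times> 'x \<Rightarrow> 'y) \<Rightarrow> nat \<Rightarrow> real \<times> 'x \<Rightarrow> 'y" where
  "concat_homotopies h 0 p = h 0 (0, snd p)"
| "concat_homotopies h (Suc n) p = (if fst p \<le> dyadic_time n then concat_homotopies h n p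
       else h n (max 0 (min 1 ((fst p - dyadic_time n) * 2 ^ Suc n)), snd p))"

lemma concat_homotopies_beyond:
  assumes hb: "\<And>k t. t \<in> T \<Longrightarrow> h k (1,t) = h (Suc k) (0,t)" and t: "t \<in> T"
    and l: "dyadic_time n \<le> l"
  shows "concat_homotopies h n (l,t) = h n (0,t)"
proof (cases n)
  case 0 then show ?thesis by simp
next
  case (Suc m)
  have "dyadic_time m < l" using l dyadic_time_less_Suc[of m] Suc by simp
  moreover have "(l - dyadic_time m) * 2 ^ Suc m \<ge> 1"
  proof -
    have "(l - dyadic_time m) * 2 ^ Suc m \<ge> (dyadic_time (Suc m) - dyadic_time m) * 2 ^ Suc m"
      using l Suc by (intro mult_right_mono) auto
    then show ?thesis using dyadic_time_Suc_diff[of m] by linarith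
  qed
  ultimately show ?thesis using Suc hb[OF t, of m] by simp
qed

lemma concat_homotopies_stable:
  assumes "l \<le> dyadic_time n"
  shows "concat_homotopies h (n + d) (l,t) = concat_homotopies h n (l,t)"
proof (induction d)
  case 0 then show ?case by simp
next
  case (Suc d)
  have "l \<le> dyadic_time (n + d)" using assms dyadic_time_mono[of n "n+d"] by simp
  then show ?case using Suc by simp
qed

lemma continuous_map_clamped_time:
  assumes H: "continuous_map (prod_topology (top_of_set {0..1::real}) X) Y H"
    and f: "continuous_map (prod_topology (top_of_set {0..1::real}) X) euclideanreal f"
  shows "continuous_map (prod_topology (top_of_set {0..1::real}) X) Y (\<lambda>p. H (max 0 (min 1 (f p)), snd p))"
proof -
  have "continuous_map (prod_topology (top_of_set {0..1::real}) X) (top_of_set {0..1}) (\<lambda>p. max 0 (min 1 (f p)))"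
    using f by (auto simp: continuous_map_in_subtopology intro!: continuous_intros)
  then have "continuous_map (prod_topology (top_of_set {0..1::real}) X) (prod_topology (top_of_set {0..1::real}) X)
      (\<lambda>p. (max 0 (min 1 (f p)), snd p))"
    unfolding continuous_map_pairwise o_def by (simp add: continuous_map_snd)
  from continuous_map_compose[OF this H] show ?thesis by (simp add: o_def)
qed

lemma continuous_map_concat_homotopies:
  assumes hc: "\<And>k. continuous_map (prod_topology (top_of_set {0..1::real}) X) X (h k)"
    and hb: "\<And>k t. t \<in> topspace X \<Longrightarrow> h k (1,t) = h (Suc k) (0,t)"
  shows "continuous_map (prod_topology (top_of_set {0..1::real}) X) X (concat_homotopies h n)"
proof (induction n)
  case 0
  show ?case
    using continuous_map_clamped_time[OF hc[of 0], where f = "\<lambda>_. 0"] by simp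
next
  case (Suc n)
  let ?Z = "prod_topology (top_of_set {0..1::real}) X"
  have "continuous_map ?Z euclideanreal (\<lambda>p. (fst p - dyadic_time n) * 2 ^ Suc n)"
    by (intro continuous_intros continuous_map_into_fulltopology[OF continuous_map_fst])
  then have last: "continuous_map ?Z X (\<lambda>p. h n (max 0 (min 1 ((fst p - dyadic_time n) * 2 ^ Suc n)), snd p))"
    by (rule continuous_map_clamped_time[OF hc])
  have "continuous_map ?Z X (\<lambda>p. if fst p \<le> dyadic_time n then concat_homotopies h n p
      else h n (max 0 (min 1 ((fst p - dyadic_time n) * 2 ^ Suc n)), snd p))"
  proof (rule continuous_map_cases_le)
    show "continuous_map ?Z euclideanreal fst"
      by (rule continuous_map_into_fulltopology[OF continuous_map_fst])
    fix p assume "p \<in> topspace ?Z" "fst p = dyadic_time n"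
    then show "concat_homotopies h n p = h n (max 0 (min 1 ((fst p - dyadic_time n) * 2 ^ Suc n)), snd p)"
      using concat_homotopies_beyond[of "topspace X" h "snd p" n "fst p", OF hb] by (cases p) auto
  qed (use Suc last in \<open>auto intro: continuous_map_from_subtopology\<close>)
  then show ?case by (simp add: fun_eq_iff)
qed

lemma concat_homotopies_trivial_tail:
  assumes hb: "\<And>k t. t \<in> T \<Longrightarrow> h k (1,t) = h (Suc k) (0,t)" and t: "t \<in> T"
    and triv: "\<And>k l. k \<ge> k0 \<Longrightarrow> l \<in> {0..1} \<Longrightarrow> h k (l,t) = t"
    and l: "dyadic_time k0 \<le> l"
  shows "concat_homotopies h (k0 + d) (l,t) = t"
proof (induction d)
  case 0
  show ?case using concat_homotopies_beyond[of T h t k0 l, OF hb t l] triv[of k0 0] by simp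
next
  case (Suc d)
  show ?case
  proof (cases "l \<le> dyadic_time (k0 + d)")
    case True then show ?thesis using Suc by simp
  next
    case False
    then have "max 0 (min 1 ((l - dyadic_time (k0+d)) * 2 ^ Suc (k0+d))) \<in> {0..1}" by simp
    then show ?thesis using False triv[of "k0+d"] by simp
  qed
qed

definition concat_all_homotopies :: "(nat \<Rightarrow> real \<times> 'x \<Rightarrow> 'x) \<Rightarrow> real \<times> 'x \<Rightarrow> 'x" where
  "concat_all_homotopies h p =
     (if fst p < 1 then concat_homotopies h (LEAST n. fst p \<le> dyadic_time n) p else snd p)"

lemma concat_all_homotopies_eventually:
  assumes hb: "\<And>k t. t \<in> T \<Longrightarrow> h k (1,t) = h (Suc k) (0,t)" and t: "t \<in> T"
    and triv: "\<And>k l. k \<ge> k0 \<Longrightarrow> l \<in> {0..1} \<Longrightarrow> h k (l,t) = t" and l: "l \<in> {0..1}"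
  shows "concat_all_homotopies h (l,t) = concat_homotopies h k0 (l,t)"
proof -
  have tail: "concat_homotopies h (k0 + d) (l',t) = t" if "dyadic_time k0 \<le> l'" for d l'
    by (rule concat_homotopies_trivial_tail[of T h t k0, OF hb t triv that]) auto
  show ?thesis
  proof (cases "l < 1")
    case False
    then have "l = 1" using l by auto
    then show ?thesis using tail[of 1 0] dyadic_time_less_1[of k0] by (simp add: concat_all_homotopies_def)
  next
    case True
    define n where "n = (LEAST n. l \<le> dyadic_time n)"
    have ln: "l \<le> dyadic_time n" unfolding n_def using dyadic_time_exceeds[OF True] by (metis LeastI)
    have "concat_all_homotopies h (l,t) = concat_homotopies h n (l,t)"
      using True by (simp add: concat_all_homotopies_def n_def)
    moreover have "concat_homotopies h n (l,t) = concat_homotopies h k0 (l,t)"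
    proof (cases "l \<le> dyadic_time k0")
      case True
      then have "n \<le> k0" unfolding n_def by (rule Least_le)
      then obtain d where "k0 = n + d" using le_Suc_ex by blast
      then show ?thesis using concat_homotopies_stable[OF ln, of h d t] by simp
    next
      case False
      then have "\<not> n \<le> k0" using ln dyadic_time_mono[of n k0] by auto
      then obtain d where "n = k0 + d" using le_Suc_ex[of k0 n] by auto
      then show ?thesis using tail[of l 0] tail[of l d] False by simp
    qed
    ultimately show ?thesis by simp
  qed
qed

lemma homotopic_infinite_concatenation:
  fixes h :: "nat \<Rightarrow> real \<times> ('v \<Rightarrow> real) \<Rightarrow> ('v \<Rightarrow> real)" and K :: "'v set set"
  assumes hc: "\<And>k. continuous_map (prod_topology (top_of_set {0..1}) (geom_real K)) (geom_real K) (h k)"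
    and hb: "\<And>k t. t \<in> topspace (geom_real K) \<Longrightarrow> h k (1,t) = h (Suc k) (0,t)"
    and ht: "\<And>S. S \<in> K \<Longrightarrow> \<exists>k0. \<forall>k\<ge>k0. \<forall>l\<in>{0..1}. \<forall>t\<in>simplex_pts S. h k (l,t) = t"
  shows "homotopic_with (\<lambda>_. True) (geom_real K) (geom_real K) (\<lambda>t. h 0 (0,t)) id"
proof -
  have "continuous_map (prod_topology (top_of_set {0..1}) (geom_real K)) (geom_real K) (concat_all_homotopies h)"
  proof (rule continuous_map_interval_times_geom_real)
    fix S assume S: "S \<in> K"
    obtain k0 where k0: "\<forall>k\<ge>k0. \<forall>l\<in>{0..1}. \<forall>t\<in>simplex_pts S. h k (l,t) = t"
      using ht[OF S] by blast
    have "continuous_map (prod_topology (top_of_set {0..1::real}) (subtopology (powertop_real UNIV) (simplex_pts S)))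
        (prod_topology (top_of_set {0..1::real}) (geom_real K)) (\<lambda>(x,y). (id x, id y))"
      unfolding continuous_map_prod_top using continuous_map_simplex_inclusion[OF S] by (simp add: id_def)
    then have "continuous_map (prod_topology (top_of_set {0..1}) (subtopology (powertop_real UNIV) (simplex_pts S)))
        (geom_real K) (concat_homotopies h k0)"
      using continuous_map_compose[OF _ continuous_map_concat_homotopies[of "geom_real K" h, OF hc hb]] by (simp add: o_def id_def)
    then show "continuous_map (prod_topology (top_of_set {0..1}) (subtopology (powertop_real UNIV) (simplex_pts S)))
        (geom_real K) (concat_all_homotopies h)"
    proof (rule continuous_map_eq)
      fix p assume "p \<in> topspace (prod_topology (top_of_set {0..1::real}) (subtopology (powertop_real UNIV) (simplex_pts S)))"
      then obtain l t where p: "p = (l,t)" "l \<in> {0..1}" "t \<in> simplex_pts S" by auto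
      then have "t \<in> topspace (geom_real K)" using S by (auto simp: topspace_geom_real)
      then show "concat_homotopies h k0 p = concat_all_homotopies h p"
        using concat_all_homotopies_eventually[of "topspace (geom_real K)" h t k0, OF hb _ _ p(2)] k0 p by simp
    qed
  qed
  moreover have "concat_all_homotopies h (0,t) = h 0 (0,t)" for t
    by (simp add: concat_all_homotopies_def Least_eq_0)
  moreover have "concat_all_homotopies h (1,t) = id t" for t
    by (simp add: concat_all_homotopies_def)
  ultimately show ?thesis
    unfolding homotopic_with_def by blast
qed

section \<open>Comparable monotone maps\<close>

text \<open>Lay the weights of
  the chain carrying a point end to end on \<open>[0,1]\<close>, from the smallest vertex upwards; at time
  \<open>l\<close> the part below \<open>1 - l\<close> is sent along \<open>\<alpha>\<close> and the rest along \<open>\<beta>\<close>. Since only lower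
  vertices are sent along \<open>\<alpha>\<close>, the support stays a chain: \<open>\<alpha> x \<subseteq> \<alpha> y \<subseteq> \<beta> y\<close> for \<open>x \<subseteq> y\<close>.\<close>

definition weight_below :: "('p set \<Rightarrow> real) \<Rightarrow> 'p set \<Rightarrow> real" where
  "weight_below t x = sum t {y. t y \<noteq> 0 \<and> y \<subset> x}"

definition stay_weight :: "real \<Rightarrow> ('p set \<Rightarrow> real) \<Rightarrow> 'p set \<Rightarrow> real" where
  "stay_weight l t x = min (t x) (max 0 (1 - l - weight_below t x))"

definition order_homotopy ::
    "('p set \<Rightarrow> 'q set) \<Rightarrow> ('p set \<Rightarrow> 'q set) \<Rightarrow> real \<Rightarrow> ('p set \<Rightarrow> real) \<Rightarrow> ('q set \<Rightarrow> real)" where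
  "order_homotopy \<alpha> \<beta> l t = (\<lambda>q. sum (stay_weight l t) {x. t x \<noteq> 0 \<and> \<alpha> x = q}
     + sum (\<lambda>x. t x - stay_weight l t x) {x. t x \<noteq> 0 \<and> \<beta> x = q})"

lemma simplex_ptsD:
  assumes "t \<in> simplex_pts S"
  shows "\<And>v. 0 \<le> t v" "\<And>v. t v \<noteq> 0 \<Longrightarrow> v \<in> S" "sum t S = 1"
  using assms unfolding simplex_pts_def by auto

lemma weight_below_eq:
  assumes t: "t \<in> simplex_pts S" and fin: "finite S"
  shows "weight_below t x = sum t {y \<in> S. y \<subset> x}"
  unfolding weight_below_def
  by (rule sum.mono_neutral_cong_left) (use simplex_ptsD[OF t] fin in auto)

lemma weight_below_nonneg:
  assumes t: "t \<in> simplex_pts S" and fin: "finite S"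
  shows "0 \<le> weight_below t x"
  unfolding weight_below_eq[OF t fin] using simplex_ptsD(1)[OF t] by (simp add: sum_nonneg)

lemma weight_below_add_eq:
  assumes t: "t \<in> simplex_pts S" and fin: "finite S"
  shows "weight_below t x + t x = sum t (insert x {y \<in> S. y \<subset> x})"
  unfolding weight_below_eq[OF t fin] using fin by (subst sum.insert) auto

lemma weight_below_add_le_1:
  assumes t: "t \<in> simplex_pts S" and fin: "finite S" and x: "x \<in> S"
  shows "weight_below t x + t x \<le> 1"
proof -
  have "sum t (insert x {y \<in> S. y \<subset> x}) \<le> sum t S"
    using fin x simplex_ptsD(1)[OF t] by (intro sum_mono2) auto
  then show ?thesis
    using weight_below_add_eq[OF t fin] simplex_ptsD(3)[OF t] by simp
qed

lemma weight_below_add_le_weight_below: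
  assumes t: "t \<in> simplex_pts S" and fin: "finite S" and x: "x \<in> S" and xz: "x \<subset> z"
  shows "weight_below t x + t x \<le> weight_below t z"
proof -
  have "sum t (insert x {y \<in> S. y \<subset> x}) \<le> sum t {y \<in> S. y \<subset> z}"
    using fin x xz simplex_ptsD(1)[OF t] by (intro sum_mono2) auto
  then show ?thesis
    using weight_below_add_eq[OF t fin] weight_below_eq[OF t fin] by simp
qed

lemma stay_weight_nonneg: "0 \<le> t x \<Longrightarrow> 0 \<le> stay_weight l t x"
  by (simp add: stay_weight_def)

lemma stay_weight_le: "stay_weight l t x \<le> t x"
  by (simp add: stay_weight_def)

lemma stay_weight_zero: "t x = 0 \<Longrightarrow> stay_weight l t x = 0"
  by (simp add: stay_weight_def)

lemma order_homotopy_eq: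
  assumes t: "t \<in> simplex_pts S" and fin: "finite S"
  shows "order_homotopy \<alpha> \<beta> l t q =
    sum (stay_weight l t) {x \<in> S. \<alpha> x = q} + sum (\<lambda>x. t x - stay_weight l t x) {x \<in> S. \<beta> x = q}"
proof -
  have "sum (stay_weight l t) {x. t x \<noteq> 0 \<and> \<alpha> x = q} = sum (stay_weight l t) {x \<in> S. \<alpha> x = q}"
    by (rule sum.mono_neutral_cong_left) (use simplex_ptsD[OF t] fin in \<open>auto simp: stay_weight_zero\<close>)
  moreover have "sum (\<lambda>x. t x - stay_weight l t x) {x. t x \<noteq> 0 \<and> \<beta> x = q}
      = sum (\<lambda>x. t x - stay_weight l t x) {x \<in> S. \<beta> x = q}"
    by (rule sum.mono_neutral_cong_left) (use simplex_ptsD[OF t] fin in \<open>auto simp: stay_weight_zero\<close>)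
  ultimately show ?thesis by (simp add: order_homotopy_def)
qed

lemma order_homotopy_0:
  assumes t: "t \<in> simplex_pts S" and fin: "finite S"
  shows "order_homotopy \<alpha> \<beta> 0 t = real_map \<alpha> t"
proof -
  have "stay_weight 0 t x = t x" if "t x \<noteq> 0" for x
    using weight_below_add_le_1[OF t fin simplex_ptsD(2)[OF t that]] by (simp add: stay_weight_def)
  then show ?thesis unfolding order_homotopy_def real_map_def fun_eq_iff
    by (auto intro!: sum.cong)
qed

lemma order_homotopy_1:
  assumes t: "t \<in> simplex_pts S" and fin: "finite S"
  shows "order_homotopy \<alpha> \<beta> 1 t = real_map \<beta> t"
proof -
  have "stay_weight 1 t x = 0" for x
    using weight_below_nonneg[OF t fin, of x] simplex_ptsD(1)[OF t, of x] unfolding stay_weight_def by simp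
  then show ?thesis unfolding order_homotopy_def real_map_def fun_eq_iff by simp
qed

lemma order_homotopy_fixed:
  assumes t: "t \<in> simplex_pts S" and fin: "finite S"
    and fixed: "\<And>x. x \<in> S \<Longrightarrow> \<alpha> x = x" "\<And>x. x \<in> S \<Longrightarrow> \<beta> x = x"
  shows "order_homotopy \<alpha> \<beta> l t = t"
proof
  fix q
  have "{x \<in> S. \<alpha> x = q} = (if q \<in> S then {q} else {})" "{x \<in> S. \<beta> x = q} = (if q \<in> S then {q} else {})"
    using fixed by auto
  then show "order_homotopy \<alpha> \<beta> l t q = t q"
    unfolding order_homotopy_eq[OF t fin] using simplex_ptsD(2)[OF t, of q] by auto
qed

lemma order_homotopy_simplex_pts:
  assumes t: "t \<in> simplex_pts S" and fin: "finite S"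
  shows "order_homotopy \<alpha> \<beta> l t \<in> simplex_pts {q. order_homotopy \<alpha> \<beta> l t q \<noteq> 0}"
    and "{q. order_homotopy \<alpha> \<beta> l t q \<noteq> 0} \<subseteq> \<alpha> ` {x \<in> S. stay_weight l t x \<noteq> 0}
           \<union> \<beta> ` {x \<in> S. t x - stay_weight l t x \<noteq> 0}"
proof -
  let ?u = "order_homotopy \<alpha> \<beta> l t"
  define W where "W = \<alpha> ` S \<union> \<beta> ` S"
  have finW: "finite W" using fin by (simp add: W_def)
  have tn: "\<And>v. 0 \<le> t v" using simplex_ptsD(1)[OF t] .
  have un: "0 \<le> ?u q" for q
    unfolding order_homotopy_eq[OF t fin] using tn stay_weight_nonneg stay_weight_le
    by (intro add_nonneg_nonneg sum_nonneg) (auto simp: algebra_simps)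
  show supp: "{q. ?u q \<noteq> 0} \<subseteq> \<alpha> ` {x \<in> S. stay_weight l t x \<noteq> 0} \<union> \<beta> ` {x \<in> S. t x - stay_weight l t x \<noteq> 0}"
  proof (rule subsetI, rule ccontr)
    fix q assume q: "q \<in> {q. ?u q \<noteq> 0}"
      and nq: "q \<notin> \<alpha> ` {x \<in> S. stay_weight l t x \<noteq> 0} \<union> \<beta> ` {x \<in> S. t x - stay_weight l t x \<noteq> 0}"
    have "sum (stay_weight l t) {x \<in> S. \<alpha> x = q} = 0" "sum (\<lambda>x. t x - stay_weight l t x) {x \<in> S. \<beta> x = q} = 0"
      using nq by (intro sum.neutral; blast)+
    then show False
      using q unfolding order_homotopy_eq[OF t fin] by simp
  qed
  then have suppW: "{q. ?u q \<noteq> 0} \<subseteq> W" unfolding W_def by blast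
  have "sum ?u W = sum (stay_weight l t) S + sum (\<lambda>x. t x - stay_weight l t x) S"
    unfolding order_homotopy_eq[OF t fin] using fin finW by (simp add: sum.distrib sum.group W_def)
  also have "\<dots> = 1" using simplex_ptsD(3)[OF t] by (simp add: sum.distrib[symmetric])
  finally have "sum ?u {q. ?u q \<noteq> 0} = 1"
    using sum.mono_neutral_left[OF finW suppW, of ?u] by simp
  then show "?u \<in> simplex_pts {q. ?u q \<noteq> 0}"
    using un unfolding simplex_pts_def by auto
qed

lemma continuous_map_order_homotopy_on_simplex:
  assumes fin: "finite S"
  shows "continuous_map (prod_topology (top_of_set {0..1::real}) (subtopology (powertop_real UNIV) (simplex_pts S)))
     (powertop_real UNIV) (\<lambda>p. order_homotopy \<alpha> \<beta> (fst p) (snd p))"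
  unfolding continuous_map_componentwise_UNIV
proof
  let ?Z = "prod_topology (top_of_set {0..1::real}) (subtopology (powertop_real UNIV) (simplex_pts S))"
  have proj: "continuous_map (subtopology (powertop_real UNIV) (simplex_pts S)) euclideanreal (\<lambda>t. t y)" for y
    by (rule continuous_map_from_subtopology[OF continuous_map_product_projection]) simp
  have coord: "continuous_map ?Z euclideanreal (\<lambda>p. snd p y)" for y
    using continuous_map_compose[OF continuous_map_snd proj] by (simp add: o_def)
  have time: "continuous_map ?Z euclideanreal fst"
    by (rule continuous_map_into_fulltopology[OF continuous_map_fst])
  fix q
  have "continuous_map ?Z euclideanreal (\<lambda>p.
      sum (\<lambda>x. min (snd p x) (max 0 (1 - fst p - sum (snd p) {y\<in>S. y \<subset> x}))) {x\<in>S. \<alpha> x = q}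
    + sum (\<lambda>x. snd p x - min (snd p x) (max 0 (1 - fst p - sum (snd p) {y\<in>S. y \<subset> x}))) {x\<in>S. \<beta> x = q})"
    using fin by (intro continuous_intros coord time) auto
  then show "continuous_map ?Z euclideanreal (\<lambda>p. order_homotopy \<alpha> \<beta> (fst p) (snd p) q)"
  proof (rule continuous_map_eq)
    fix p assume "p \<in> topspace ?Z"
    then have t: "snd p \<in> simplex_pts S" by auto
    show "sum (\<lambda>x. min (snd p x) (max 0 (1 - fst p - sum (snd p) {y\<in>S. y \<subset> x}))) {x\<in>S. \<alpha> x = q}
      + sum (\<lambda>x. snd p x - min (snd p x) (max 0 (1 - fst p - sum (snd p) {y\<in>S. y \<subset> x}))) {x\<in>S. \<beta> x = q}
      = order_homotopy \<alpha> \<beta> (fst p) (snd p) q"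
      unfolding order_homotopy_eq[OF t fin] stay_weight_def weight_below_eq[OF t fin] ..
  qed
qed

locale monotone_le_maps =
  fixes P :: "'p set set" and P' :: "'q set set" and \<alpha> \<beta> :: "'p set \<Rightarrow> 'q set"
  assumes maps_to: "\<And>x. x \<in> P \<Longrightarrow> \<alpha> x \<in> P'" "\<And>x. x \<in> P \<Longrightarrow> \<beta> x \<in> P'"
    and mono: "\<And>x y. x \<in> P \<Longrightarrow> y \<in> P \<Longrightarrow> x \<subseteq> y \<Longrightarrow> \<alpha> x \<subseteq> \<alpha> y"
      "\<And>x y. x \<in> P \<Longrightarrow> y \<in> P \<Longrightarrow> x \<subseteq> y \<Longrightarrow> \<beta> x \<subseteq> \<beta> y"
    and le: "\<And>x. x \<in> P \<Longrightarrow> \<alpha> x \<subseteq> \<beta> x"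
begin

lemma stay_weight_below_move_weight:
  assumes S: "S \<in> order_complex P (\<subseteq>)" and t: "t \<in> simplex_pts S"
    and x: "x \<in> S" "stay_weight l t x \<noteq> 0" and y: "y \<in> S" "t y - stay_weight l t y \<noteq> 0"
  shows "\<alpha> x \<subseteq> \<beta> y"
proof -
  have fin: "finite S" and SP: "S \<subseteq> P" and chain: "x \<subseteq> y \<or> y \<subseteq> x"
    using S x y unfolding order_complex_def by auto
  have "x \<subseteq> y"
  proof (rule ccontr)
    assume "\<not> x \<subseteq> y"
    then have "y \<subset> x" using chain by blast
    then have "weight_below t y + t y \<le> weight_below t x"
      by (rule weight_below_add_le_weight_below[OF t fin y(1)])
    moreover have "0 < 1 - l - weight_below t x"
      using x(2) simplex_ptsD(1)[OF t, of x] unfolding stay_weight_def by (auto simp: min_def max_def split: if_splits)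
    moreover have "1 - l - weight_below t y < t y"
      using y(2) stay_weight_le[of l t y] unfolding stay_weight_def by (auto simp: min_def max_def split: if_splits)
    ultimately show False by linarith
  qed
  then show ?thesis
    using mono(1) le SP x(1) y(1) by blast
qed

lemma comparable_in_order_homotopy_images:
  assumes S: "S \<in> order_complex P (\<subseteq>)" and t: "t \<in> simplex_pts S"
    and "a \<in> \<alpha> ` {x \<in> S. stay_weight l t x \<noteq> 0} \<union> \<beta> ` {x \<in> S. t x - stay_weight l t x \<noteq> 0}"
    and "b \<in> \<alpha> ` {x \<in> S. stay_weight l t x \<noteq> 0} \<union> \<beta> ` {x \<in> S. t x - stay_weight l t x \<noteq> 0}"
  shows "a \<subseteq> b \<or> b \<subseteq> a"
proof -
  have SP: "S \<subseteq> P" and chain: "\<And>x y. x \<in> S \<Longrightarrow> y \<in> S \<Longrightarrow> x \<subseteq> y \<or> y \<subseteq> x"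
    using S unfolding order_complex_def by auto
  from assms(3,4) show ?thesis
  proof (elim UnE imageE)
    fix x y assume "a = \<alpha> x" "b = \<alpha> y" "x \<in> {x \<in> S. stay_weight l t x \<noteq> 0}" "y \<in> {x \<in> S. stay_weight l t x \<noteq> 0}"
    then show ?thesis using chain[of x y] mono(1)[of x y] mono(1)[of y x] SP by auto
  next
    fix x y assume "a = \<beta> x" "b = \<beta> y" "x \<in> {x \<in> S. t x - stay_weight l t x \<noteq> 0}"
      "y \<in> {x \<in> S. t x - stay_weight l t x \<noteq> 0}"
    then show ?thesis using chain[of x y] mono(2)[of x y] mono(2)[of y x] SP by auto
  next
    fix x y assume "a = \<alpha> x" "b = \<beta> y" "x \<in> {x \<in> S. stay_weight l t x \<noteq> 0}"
      "y \<in> {x \<in> S. t x - stay_weight l t x \<noteq> 0}"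
    then show ?thesis using stay_weight_below_move_weight[OF S t, where x = x and y = y and l = l] by simp
  next
    fix x y assume "a = \<beta> x" "b = \<alpha> y" "x \<in> {x \<in> S. t x - stay_weight l t x \<noteq> 0}"
      "y \<in> {x \<in> S. stay_weight l t x \<noteq> 0}"
    then show ?thesis using stay_weight_below_move_weight[OF S t, where x = y and y = x and l = l] by simp
  qed
qed

lemma order_homotopy_support:
  assumes S: "S \<in> order_complex P (\<subseteq>)" and t: "t \<in> simplex_pts S"
  shows "{q. order_homotopy \<alpha> \<beta> l t q \<noteq> 0} \<in> order_complex P' (\<subseteq>)"
proof -
  have fin: "finite S" and SP: "S \<subseteq> P"
    using S unfolding order_complex_def by auto
  define W where "W = \<alpha> ` {x \<in> S. stay_weight l t x \<noteq> 0} \<union> \<beta> ` {x \<in> S. t x - stay_weight l t x \<noteq> 0}"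
  define U where "U = {q. order_homotopy \<alpha> \<beta> l t q \<noteq> 0}"
  have supp: "U \<subseteq> W"
    unfolding U_def W_def by (rule order_homotopy_simplex_pts(2)[OF t fin])
  have "finite W" "W \<subseteq> P'"
    using fin SP maps_to unfolding W_def by auto
  moreover have "sum (order_homotopy \<alpha> \<beta> l t) U = 1"
    using order_homotopy_simplex_pts(1)[OF t fin] unfolding simplex_pts_def U_def by blast
  then have "U \<noteq> {}" by (metis sum.empty zero_neq_one)
  moreover have "a \<subseteq> b \<or> b \<subseteq> a" if "a \<in> W" "b \<in> W" for a b
    using comparable_in_order_homotopy_images[OF S t] that unfolding W_def by blast
  ultimately show ?thesis
    using supp finite_subset unfolding order_complex_def U_def[symmetric] by blast
qed

lemma continuous_map_order_homotopy:
  "continuous_map (prod_topology (top_of_set {0..1::real}) (poset_real P (\<subseteq>))) (poset_real P' (\<subseteq>))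
     (\<lambda>p. order_homotopy \<alpha> \<beta> (fst p) (snd p))"
  unfolding poset_real_def
proof (rule continuous_map_interval_times_geom_real)
  fix S assume S: "S \<in> order_complex P (\<subseteq>)"
  then have fin: "finite S" unfolding order_complex_def by auto
  define \<T> where "\<T> = {T \<in> order_complex P' (\<subseteq>). T \<subseteq> \<alpha> ` S \<union> \<beta> ` S}"
  have "\<T> \<subseteq> Pow (\<alpha> ` S \<union> \<beta> ` S)" unfolding \<T>_def by auto
  then have "finite \<T>" using fin by (meson finite_Pow_iff finite_Un finite_imageI finite_subset)
  then show "continuous_map (prod_topology (top_of_set {0..1}) (subtopology (powertop_real UNIV) (simplex_pts S)))
      (geom_real (order_complex P' (\<subseteq>))) (\<lambda>p. order_homotopy \<alpha> \<beta> (fst p) (snd p))"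
  proof (rule continuous_map_into_geom_real[OF continuous_map_order_homotopy_on_simplex[OF fin]])
    show "\<T> \<subseteq> order_complex P' (\<subseteq>)" "\<And>T. T \<in> \<T> \<Longrightarrow> finite T"
      unfolding \<T>_def order_complex_def by auto
    fix p assume "p \<in> topspace (prod_topology (top_of_set {0..1::real}) (subtopology (powertop_real UNIV) (simplex_pts S)))"
    then have t: "snd p \<in> simplex_pts S" by auto
    have "{q. order_homotopy \<alpha> \<beta> (fst p) (snd p) q \<noteq> 0} \<in> \<T>"
      unfolding \<T>_def using order_homotopy_support[OF S t] order_homotopy_simplex_pts(2)[OF t fin] by blast
    then show "order_homotopy \<alpha> \<beta> (fst p) (snd p) \<in> (\<Union>T\<in>\<T>. simplex_pts T)"
      using order_homotopy_simplex_pts(1)[OF t fin] by blast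
  qed
qed

end

lemma continuous_map_reverse_time:
  "continuous_map (prod_topology (top_of_set {0..1::real}) Y) (prod_topology (top_of_set {0..1::real}) Y)
     (\<lambda>p. (1 - fst p, snd p))"
proof -
  have "continuous_map (prod_topology (top_of_set {0..1::real}) Y) euclideanreal (\<lambda>p. 1 - fst p)"
    by (intro continuous_intros continuous_map_into_fulltopology[OF continuous_map_fst])
  then have "continuous_map (prod_topology (top_of_set {0..1::real}) Y) (top_of_set {0..1}) (\<lambda>p. 1 - fst p)"
    by (auto simp: continuous_map_in_subtopology)
  then show ?thesis unfolding continuous_map_pairwise o_def by (simp add: continuous_map_snd)
qed

lemma (in monotone_le_maps) continuous_map_order_homotopy_reversed:
  "continuous_map (prod_topology (top_of_set {0..1::real}) (poset_real P (\<subseteq>))) (poset_real P' (\<subseteq>))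
     (\<lambda>p. order_homotopy \<alpha> \<beta> (1 - fst p) (snd p))"
  using continuous_map_compose[OF continuous_map_reverse_time continuous_map_order_homotopy]
  by (simp add: o_def)

lemma topspace_poset_real:
  "topspace (poset_real P le) = (\<Union>S\<in>order_complex P le. simplex_pts S)"
  by (simp add: poset_real_def topspace_geom_real)

lemma finite_support_simplex_pts:
  assumes "t \<in> simplex_pts S" "finite S"
  shows "finite {x. t x \<noteq> 0}"
proof (rule finite_subset[OF _ assms(2)])
  show "{x. t x \<noteq> 0} \<subseteq> S" using simplex_ptsD(2)[OF assms(1)] by blast
qed

lemma real_map_cong:
  assumes "\<And>x. t x \<noteq> 0 \<Longrightarrow> f x = g x"
  shows "real_map f t = real_map g t"
  unfolding real_map_def fun_eq_iff using assms by (auto intro!: sum.cong)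

lemma real_map_id [simp]: "real_map id t = t"
proof
  fix q
  have "{p. t p \<noteq> 0 \<and> id p = q} = (if t q \<noteq> 0 then {q} else {})" by auto
  then show "real_map id t q = t q" unfolding real_map_def by auto
qed
lemma real_map_compose:
  assumes "finite {x. t x \<noteq> 0}"
  shows "real_map f (real_map g t) = real_map (f \<circ> g) t"
proof
  fix q
  define D where "D = {x. t x \<noteq> 0}"
  have fD: "finite D" using assms by (simp add: D_def)
  have rg: "real_map g t p = sum t {x \<in> D. g x = p}" for p
    unfolding real_map_def D_def by (rule sum.cong) auto
  have "real_map f (real_map g t) q = sum (real_map g t) {p. real_map g t p \<noteq> 0 \<and> f p = q}"
    by (simp add: real_map_def)
  also have "\<dots> = sum (real_map g t) {p \<in> g ` D. f p = q}"
  proof (rule sum.mono_neutral_left)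
    show "finite {p \<in> g ` D. f p = q}" using fD by simp
    show "{p. real_map g t p \<noteq> 0 \<and> f p = q} \<subseteq> {p \<in> g ` D. f p = q}"
    proof
      fix p assume p: "p \<in> {p. real_map g t p \<noteq> 0 \<and> f p = q}"
      then have "{x \<in> D. g x = p} \<noteq> {}" using rg[of p] by force
      then show "p \<in> {p \<in> g ` D. f p = q}" using p by blast
    qed
    show "\<forall>i\<in>{p \<in> g ` D. f p = q} - {p. real_map g t p \<noteq> 0 \<and> f p = q}. real_map g t i = 0" by auto
  qed
  also have "\<dots> = sum (\<lambda>p. sum t {x \<in> D. g x = p}) {p \<in> g ` D. f p = q}"
    using rg by simp
  also have "\<dots> = sum t {x \<in> D. f (g x) = q}"
  proof -
    have fin: "finite {x \<in> D. f (g x) = q}" using fD by simp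
    have "sum t {x \<in> D. f (g x) = q} = sum (\<lambda>p. sum t {x \<in> {x \<in> D. f (g x) = q}. g x = p}) (g ` {x \<in> D. f (g x) = q})"
      by (rule sum.image_gen[OF fin])
    moreover have "g ` {x \<in> D. f (g x) = q} = {p \<in> g ` D. f p = q}" by auto
    moreover have "{x \<in> {x \<in> D. f (g x) = q}. g x = p} = {x \<in> D. g x = p}" if "p \<in> {p \<in> g ` D. f p = q}" for p
      using that by auto
    ultimately show ?thesis by (auto intro!: sum.cong)
  qed
  also have "\<dots> = real_map (f \<circ> g) t q"
    unfolding real_map_def D_def by (rule sum.cong) auto
  finally show "real_map f (real_map g t) q = real_map (f \<circ> g) t q" .
qed

lemma real_map_compose_on_poset_real:
  assumes t: "t \<in> topspace (poset_real P le)" and fg: "\<And>x. x \<in> P \<Longrightarrow> f (g x) = k x"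
  shows "real_map f (real_map g t) = real_map k t"
proof -
  obtain S where S: "S \<in> order_complex P le" "t \<in> simplex_pts S"
    using t by (auto simp: topspace_poset_real)
  then have fin: "finite S" and "S \<subseteq> P" by (auto simp: order_complex_def)
  have "real_map f (real_map g t) = real_map (f \<circ> g) t"
    by (rule real_map_compose[OF finite_support_simplex_pts[OF S(2) fin]])
  also have "\<dots> = real_map k t"
    using fg simplex_ptsD(2)[OF S(2)] \<open>S \<subseteq> P\<close> by (intro real_map_cong) auto
  finally show ?thesis .
qed

lemma continuous_map_real_map:
  assumes maps_to: "\<And>x. x \<in> P \<Longrightarrow> \<alpha> x \<in> P'"
    and mono: "\<And>x y. x \<in> P \<Longrightarrow> y \<in> P \<Longrightarrow> x \<subseteq> y \<Longrightarrow> \<alpha> x \<subseteq> \<alpha> y"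
  shows "continuous_map (poset_real P (\<subseteq>)) (poset_real P' (\<subseteq>)) (real_map \<alpha>)"
proof -
  interpret monotone_le_maps P P' \<alpha> \<alpha>
    using assms by unfold_locales auto
  have "continuous_map (poset_real P (\<subseteq>)) (prod_topology (top_of_set {0..1::real}) (poset_real P (\<subseteq>))) (\<lambda>t. (0, t))"
    unfolding continuous_map_pairwise o_def by (simp add: continuous_map_in_subtopology)
  from continuous_map_compose[OF this continuous_map_order_homotopy]
  have "continuous_map (poset_real P (\<subseteq>)) (poset_real P' (\<subseteq>)) (order_homotopy \<alpha> \<alpha> 0)"
    by (simp add: o_def)
  then show ?thesis
  proof (rule continuous_map_eq)
    fix t assume "t \<in> topspace (poset_real P (\<subseteq>))"
    then obtain S where "S \<in> order_complex P (\<subseteq>)" "t \<in> simplex_pts S" by (auto simp: topspace_poset_real)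
    then show "order_homotopy \<alpha> \<alpha> 0 t = real_map \<alpha> t"
      using order_homotopy_0 by (auto simp: order_complex_def)
  qed
qed

text \<open>Step \<open>2N\<close> runs from \<open>f N\<close> up to \<open>f N \<union> f (N + 1)\<close>, step \<open>2N + 1\<close> back down to \<open>f (N + 1)\<close>.\<close>

definition telescope_homotopy :: "(nat \<Rightarrow> 'p set \<Rightarrow> 'q set) \<Rightarrow> nat \<Rightarrow> real \<times> ('p set \<Rightarrow> real) \<Rightarrow> 'q set \<Rightarrow> real" where
  "telescope_homotopy f k p =
    (if even k then order_homotopy (f (k div 2)) (\<lambda>x. f (k div 2) x \<union> f (Suc (k div 2)) x) (fst p) (snd p)
     else order_homotopy (f (Suc (k div 2))) (\<lambda>x. f (k div 2) x \<union> f (Suc (k div 2)) x) (1 - fst p) (snd p))"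

lemma telescope_homotopy_0:
  assumes "t \<in> simplex_pts S" "finite S"
  shows "telescope_homotopy f 0 (0,t) = real_map (f 0) t"
  by (simp add: telescope_homotopy_def order_homotopy_0[OF assms])

lemma telescope_homotopy_junction:
  assumes t: "t \<in> simplex_pts S" and fin: "finite S"
  shows "telescope_homotopy f k (1,t) = telescope_homotopy f (Suc k) (0,t)"
proof (cases "even k")
  case True
  then have "Suc k div 2 = k div 2" "odd (Suc k)" by auto
  then show ?thesis using True by (simp add: telescope_homotopy_def order_homotopy_1[OF t fin])
next
  case False
  then have "Suc k div 2 = Suc (k div 2)" "even (Suc k)" by auto
  then show ?thesis using False by (simp add: telescope_homotopy_def order_homotopy_0[OF t fin])
qed

lemma telescope_homotopy_fixed:
  assumes t: "t \<in> simplex_pts S" and fin: "finite S"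
    and fixed: "\<And>x. x \<in> S \<Longrightarrow> f (k div 2) x = x" "\<And>x. x \<in> S \<Longrightarrow> f (Suc (k div 2)) x = x"
  shows "telescope_homotopy f k (l,t) = t"
  using order_homotopy_fixed[OF t fin] fixed by (simp add: telescope_homotopy_def)

lemma continuous_map_telescope_homotopy:
  fixes f :: "nat \<Rightarrow> 'p set \<Rightarrow> 'p set"
  assumes maps_to: "\<And>N x. x \<in> Q \<Longrightarrow> f N x \<in> Q" "\<And>N x. x \<in> Q \<Longrightarrow> f N x \<union> f (Suc N) x \<in> Q"
    and mono: "\<And>N x y. x \<in> Q \<Longrightarrow> y \<in> Q \<Longrightarrow> x \<subseteq> y \<Longrightarrow> f N x \<subseteq> f N y"
  shows "continuous_map (prod_topology (top_of_set {0..1}) (poset_real Q (\<subseteq>))) (poset_real Q (\<subseteq>))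
    (telescope_homotopy f k)"
proof -
  have up: "monotone_le_maps Q Q (f N) (\<lambda>x. f N x \<union> f (Suc N) x)"
    and down: "monotone_le_maps Q Q (f (Suc N)) (\<lambda>x. f N x \<union> f (Suc N) x)" for N
    by (unfold_locales; simp add: maps_to mono Un_mono le_supI1 le_supI2)+
  show ?thesis
  proof (cases "even k")
    case True
    then show ?thesis
      using monotone_le_maps.continuous_map_order_homotopy[OF up]
      by (simp add: telescope_homotopy_def[abs_def])
  next
    case False
    then show ?thesis
      using monotone_le_maps.continuous_map_order_homotopy_reversed[OF down]
      by (simp add: telescope_homotopy_def[abs_def])
  qed
qed

lemma homotopic_real_map_eventually_id:
  fixes f :: "nat \<Rightarrow> 'p set \<Rightarrow> 'p set"
  assumes maps_to: "\<And>N x. x \<in> Q \<Longrightarrow> f N x \<in> Q" "\<And>N x. x \<in> Q \<Longrightarrow> f N x \<union> f (Suc N) x \<in> Q"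
    and mono: "\<And>N x y. x \<in> Q \<Longrightarrow> y \<in> Q \<Longrightarrow> x \<subseteq> y \<Longrightarrow> f N x \<subseteq> f N y"
    and eventually_id: "\<And>S. S \<in> order_complex Q (\<subseteq>) \<Longrightarrow> \<exists>N0. \<forall>N\<ge>N0. \<forall>x\<in>S. f N x = x"
  shows "homotopic_with (\<lambda>_. True) (poset_real Q (\<subseteq>)) (poset_real Q (\<subseteq>)) (real_map (f 0)) id"
proof -
  let ?K = "order_complex Q (\<subseteq>)"
  have "homotopic_with (\<lambda>_. True) (geom_real ?K) (geom_real ?K) (\<lambda>t. telescope_homotopy f 0 (0,t)) id"
  proof (rule homotopic_infinite_concatenation)
    show "continuous_map (prod_topology (top_of_set {0..1}) (geom_real ?K)) (geom_real ?K) (telescope_homotopy f k)" for k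
      using continuous_map_telescope_homotopy[where Q = Q and f = f, OF maps_to mono]
      by (simp add: poset_real_def)
    show "telescope_homotopy f k (1,t) = telescope_homotopy f (Suc k) (0,t)" if t: "t \<in> topspace (geom_real ?K)" for k t
    proof -
      obtain S where "S \<in> ?K" and tS: "t \<in> simplex_pts S" using t by (auto simp: topspace_geom_real)
      then have "finite S" by (simp add: order_complex_def)
      then show ?thesis by (rule telescope_homotopy_junction[OF tS])
    qed
    fix S assume S: "S \<in> ?K"
    then have fin: "finite S" by (simp add: order_complex_def)
    obtain N0 where N0: "\<And>N x. N \<ge> N0 \<Longrightarrow> x \<in> S \<Longrightarrow> f N x = x" using eventually_id[OF S] by blast
    have "telescope_homotopy f k (l,t) = t" if "k \<ge> 2 * N0" "t \<in> simplex_pts S" for k l t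
      by (rule telescope_homotopy_fixed[OF that(2) fin]) (use N0 that(1) in auto)
    then show "\<exists>k0. \<forall>k\<ge>k0. \<forall>l\<in>{0..1}. \<forall>t\<in>simplex_pts S. telescope_homotopy f k (l,t) = t"
      by blast
  qed
  then show ?thesis
    unfolding poset_real_def
  proof (rule homotopic_with_eq)
    fix t assume "t \<in> topspace (geom_real ?K)"
    then obtain S where "S \<in> ?K" and tS: "t \<in> simplex_pts S" by (auto simp: topspace_geom_real)
    then have "finite S" by (simp add: order_complex_def)
    then show "real_map (f 0) t = telescope_homotopy f 0 (0,t)"
      by (simp add: telescope_homotopy_0[OF tS])
  qed auto
qed

section \<open>The zigzag retraction\<close>

text \<open>The composite of the retractions r_n, r_{n+1}, \<dots>: it folds \<int> onto L_{-n,n+1},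
  alternating between the two outermost vertices on either side.\<close>

definition zigzag :: "nat \<Rightarrow> int \<Rightarrow> int" where
  "zigzag n s = (if s < - int n then - int n + ((s + int n) mod 2)
     else if s > int n + 1 then int n + 1 - ((s - int n - 1) mod 2) else s)"

lemma zigzag_bounds: "- int n \<le> zigzag n s \<and> zigzag n s \<le> int n + 1"
  unfolding zigzag_def by presburger

lemma zigzag_id: "- int n \<le> s \<Longrightarrow> s \<le> int n + 1 \<Longrightarrow> zigzag n s = s"
  unfolding zigzag_def by presburger

lemma zigzag_mod_2: "zigzag n s mod 2 = s mod 2"
  unfolding zigzag_def by (auto split: if_splits; presburger)

lemma zigzag_adjacent_Suc: "\<bar>zigzag n (s + 1) - zigzag n s\<bar> = 1"
  unfolding zigzag_def by (auto split: if_splits; presburger)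

lemma zigzag_adjacent: "\<bar>s - t\<bar> = 1 \<Longrightarrow> \<bar>zigzag n s - zigzag n t\<bar> = 1"
proof -
  assume "\<bar>s - t\<bar> = 1"
  then have "s = t + 1 \<or> t = s + 1" by auto
  then show ?thesis using zigzag_adjacent_Suc[of n s] zigzag_adjacent_Suc[of n t] by auto
qed

lemma zigzag_Suc_stage_adjacent_left: "\<bar>zigzag n (s + 1) - zigzag (Suc n) s\<bar> = 1"
  unfolding zigzag_def by (auto split: if_splits; presburger)

lemma zigzag_Suc_stage_adjacent_right: "\<bar>zigzag n s - zigzag (Suc n) (s + 1)\<bar> = 1"
  unfolding zigzag_def by (auto split: if_splits; presburger)

lemma zigzag_Suc_stage_adjacent: "\<bar>s - t\<bar> = 1 \<Longrightarrow> \<bar>zigzag n s - zigzag (Suc n) t\<bar> = 1"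
proof -
  assume "\<bar>s - t\<bar> = 1"
  then have "s = t + 1 \<or> t = s + 1" by auto
  then show ?thesis using zigzag_Suc_stage_adjacent_left[of n t] zigzag_Suc_stage_adjacent_right[of n s] by auto
qed

lemma zigzag_adjacent_stages:
  assumes "\<bar>s - t\<bar> = 1" "m \<le> Suc n" "n \<le> Suc m"
  shows "\<bar>zigzag m s - zigzag n t\<bar> = 1"
proof -
  consider "m = n" | "m = Suc n" | "n = Suc m" using assms(2,3) by linarith
  then show ?thesis
  proof cases
    case 2
    have ts: "\<bar>t - s\<bar> = 1" using assms(1) by arith
    show ?thesis using zigzag_Suc_stage_adjacent[OF ts, of n] 2 by (simp add: abs_minus_commute)
  qed (use assms(1) zigzag_adjacent zigzag_Suc_stage_adjacent in auto)
qed

lemma zigzag_low: "s \<le> - int n + 1 \<Longrightarrow> zigzag n s = - int n \<or> zigzag n s = - int n + 1"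
  unfolding zigzag_def by presburger

lemma zigzag_high: "int n \<le> s \<Longrightarrow> zigzag n s = int n \<or> zigzag n s = int n + 1"
  unfolding zigzag_def by presburger

lemma eq_if_consecutive_same_parity:
  fixes x y a :: int
  assumes "x = a \<or> x = a + 1" "y = a \<or> y = a + 1" "x mod 2 = y mod 2"
  shows "x = y"
  using assms by presburger

lemma zigzag_zigzag:
  assumes "n \<le> m"
  shows "zigzag n (zigzag m s) = zigzag n s"
proof -
  have parity: "zigzag n (zigzag m s) mod 2 = zigzag n s mod 2"
    by (simp add: zigzag_mod_2)
  consider "s < - int m" | "s > int m + 1" | "- int m \<le> s \<and> s \<le> int m + 1" by linarith
  then show ?thesis
  proof cases
    case 1
    then have "zigzag m s \<le> - int n + 1" "s \<le> - int n + 1"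
      using zigzag_low[of s m] assms by auto
    then show ?thesis
      using eq_if_consecutive_same_parity[OF zigzag_low zigzag_low parity] by blast
  next
    case 2
    then have "int n \<le> zigzag m s" "int n \<le> s"
      using zigzag_high[of m s] assms by auto
    then show ?thesis
      using eq_if_consecutive_same_parity[OF zigzag_high zigzag_high parity] by blast
  qed (simp add: zigzag_id)
qed

lemma retr_eq_zigzag:
  assumes "- int m - 1 \<le> s" "s \<le> int m + 2"
  shows "retr m s = zigzag m s"
proof -
  consider "s = - int m - 1" | "s = int m + 2" | "- int m \<le> s \<and> s \<le> int m + 1" using assms by linarith
  then show ?thesis
  proof cases
    case 1 then show ?thesis by (simp add: retr_def zigzag_def)
  next
    case 2 then show ?thesis by (simp add: retr_def zigzag_def)
  next
    case 3 then show ?thesis by (auto simp: retr_def zigzag_def)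
  qed
qed

lemma zigzag_retr: "n \<le> m \<Longrightarrow> - int m - 1 \<le> s \<Longrightarrow> s \<le> int m + 2 \<Longrightarrow> zigzag n (retr m s) = zigzag n s"
  using retr_eq_zigzag zigzag_zigzag by metis

abbreviation L_stage :: "nat \<Rightarrow> int set" where "L_stage n \<equiv> L_verts (- int n) (int n + 1)"

lemma mem_L_stage: "s \<in> L_stage n \<longleftrightarrow> - int n \<le> s \<and> s \<le> int n + 1" by (simp add: L_verts_def)

lemma zigzag_in_stage: "zigzag n s \<in> L_stage n" using zigzag_bounds by (simp add: L_verts_def)

lemma XLn_verts_iff: "h \<in> XLn_verts V eps n \<longleftrightarrow> h \<in> extensional (L_stage n) \<and> (\<forall>s\<in>L_stage n. h s \<in> V \<and> eps (h s) = s mod 2)"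
  by (auto simp: XLn_verts_def hom_verts_def L_eps_def)

lemma retr_in_stage: "- int m - 1 \<le> s \<Longrightarrow> s \<le> int m + 2 \<Longrightarrow> retr m s \<in> L_stage m"
  using retr_eq_zigzag zigzag_in_stage by metis

lemma lift_eq_zigzag:
  assumes "h \<in> extensional (L_stage n)"
  shows "lift n d h \<in> extensional (L_stage (n+d)) \<and> (\<forall>s\<in>L_stage (n+d). lift n d h s = h (zigzag n s))"
proof (induction d)
  case 0 then show ?case using assms by (simp add: zigzag_id mem_L_stage)
next
  case (Suc d)
  have eqI: "L_verts (- int (n+d) - 1) (int (n+d) + 2) = L_stage (n + Suc d)" by (simp add: L_verts_def)
  have lf: "lift n (Suc d) h = restrict (lift n d h \<circ> retr (n+d)) (L_stage (n + Suc d))"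
    by (simp only: lift.simps retr_star_def eqI)
  show ?case
  proof
    show "lift n (Suc d) h \<in> extensional (L_stage (n + Suc d))" unfolding lf by simp
    show "\<forall>s\<in>L_stage (n + Suc d). lift n (Suc d) h s = h (zigzag n s)"
    proof
      fix s assume s: "s \<in> L_stage (n + Suc d)"
      then have b: "- int (n+d) - 1 \<le> s" "s \<le> int (n+d) + 2" by (auto simp: L_verts_def)
      have "lift n (Suc d) h s = lift n d h (retr (n+d) s)" using s unfolding lf by simp
      also have "\<dots> = h (zigzag n (retr (n+d) s))" using Suc.IH retr_in_stage[OF b] by blast
      also have "\<dots> = h (zigzag n s)" using zigzag_retr[OF _ b] by simp
      finally show "lift n (Suc d) h s = h (zigzag n s)" .
    qed
  qed
qed

lemma XL_rel_iff:
  "((n,h),(m,h')) \<in> XL_rel V eps \<longleftrightarrow>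
     h \<in> XLn_verts V eps n \<and> h' \<in> XLn_verts V eps m \<and> h \<circ> zigzag n = h' \<circ> zigzag m"
proof
  assume r: "((n,h),(m,h')) \<in> XL_rel V eps"
  then have hW: "h \<in> XLn_verts V eps n" and h'W: "h' \<in> XLn_verts V eps m"
    and "\<exists>k. n \<le> k \<and> m \<le> k \<and> lift n (k-n) h = lift m (k-m) h'"
    by (auto simp: XL_rel_def)
  then obtain k where k: "n \<le> k" "m \<le> k" "lift n (k-n) h = lift m (k-m) h'" by blast
  have eh: "h \<in> extensional (L_stage n)" and eh': "h' \<in> extensional (L_stage m)" using hW h'W by (auto simp: XLn_verts_iff)
  have "h (zigzag n s) = h' (zigzag m s)" for s
  proof -
    have s': "zigzag k s \<in> L_stage (n + (k - n))" "zigzag k s \<in> L_stage (m + (k - m))" using zigzag_in_stage[of k s] k by auto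
    have "h (zigzag n s) = h (zigzag n (zigzag k s))" using zigzag_zigzag[OF k(1)] by simp
    also have "\<dots> = lift n (k-n) h (zigzag k s)" using lift_eq_zigzag[OF eh, of "k-n"] s'(1) by simp
    also have "\<dots> = lift m (k-m) h' (zigzag k s)" using k(3) by simp
    also have "\<dots> = h' (zigzag m (zigzag k s))" using lift_eq_zigzag[OF eh', of "k-m"] s'(2) by simp
    also have "\<dots> = h' (zigzag m s)" using zigzag_zigzag[OF k(2)] by simp
    finally show ?thesis .
  qed
  then show "h \<in> XLn_verts V eps n \<and> h' \<in> XLn_verts V eps m \<and> h \<circ> zigzag n = h' \<circ> zigzag m"
    using hW h'W by (auto simp: fun_eq_iff)
next
  assume r: "h \<in> XLn_verts V eps n \<and> h' \<in> XLn_verts V eps m \<and> h \<circ> zigzag n = h' \<circ> zigzag m"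
  define k where "k = max n m"
  have k: "n \<le> k" "m \<le> k" by (auto simp: k_def)
  have eh: "h \<in> extensional (L_stage n)" and eh': "h' \<in> extensional (L_stage m)" using r by (auto simp: XLn_verts_iff)
  have I1: "L_stage (n + (k - n)) = L_stage k" and I2: "L_stage (m + (k - m)) = L_stage k" using k by auto
  have "lift n (k-n) h = lift m (k-m) h'"
  proof (rule extensionalityI)
    show "lift n (k-n) h \<in> extensional (L_stage k)" using lift_eq_zigzag[OF eh, of "k-n"] I1 by simp
    show "lift m (k-m) h' \<in> extensional (L_stage k)" using lift_eq_zigzag[OF eh', of "k-m"] I2 by simp
    fix s assume s: "s \<in> L_stage k"
    have "lift n (k-n) h s = h (zigzag n s)" using lift_eq_zigzag[OF eh, of "k-n"] I1 s by simp
    also have "\<dots> = h' (zigzag m s)" using r by (metis comp_apply)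
    also have "\<dots> = lift m (k-m) h' s" using lift_eq_zigzag[OF eh', of "k-m"] I2 s by simp
    finally show "lift n (k-n) h s = lift m (k-m) h' s" .
  qed
  then show "((n,h),(m,h')) \<in> XL_rel V eps"
    using r k unfolding XL_rel_def by auto
qed

section \<open>The vertices and edges of X^L\<close>

text \<open>All representatives (n, h) of a vertex of X^L give the same map h \<circ> zigzag n : \<int> \<rightarrow> V
  (by XL_rel_iff); this map describes the vertex.\<close>

definition XL_path :: "(nat \<times> (int \<Rightarrow> 'a)) set \<Rightarrow> int \<Rightarrow> 'a" where
  "XL_path A = snd (SOME p. p \<in> A) \<circ> zigzag (fst (SOME p. p \<in> A))"

definition XL_class :: "'a set \<Rightarrow> ('a \<Rightarrow> int) \<Rightarrow> nat \<Rightarrow> (int \<Rightarrow> 'a) \<Rightarrow> (nat \<times> (int \<Rightarrow> 'a)) set" where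
  "XL_class V eps n h = XL_rel V eps `` {(n,h)}"

definition XL_truncate :: "'a set \<Rightarrow> ('a \<Rightarrow> int) \<Rightarrow> nat \<Rightarrow> (nat \<times> (int \<Rightarrow> 'a)) set \<Rightarrow> (nat \<times> (int \<Rightarrow> 'a)) set" where
  "XL_truncate V eps N A = XL_class V eps N (restrict (XL_path A) (L_stage N))"

definition XL_base :: "(nat \<times> (int \<Rightarrow> 'a)) set \<Rightarrow> int \<Rightarrow> 'a" where
  "XL_base A = restrict (XL_path A) (L_stage 0)"

lemma XL_incl_eq_XL_class: "XL_incl V eps h = XL_class V eps 0 h"
  by (simp add: XL_incl_def XL_class_def)

lemma mem_XL_class:
  "h \<in> XLn_verts V eps n \<Longrightarrow>
     (m,h') \<in> XL_class V eps n h \<longleftrightarrow> h' \<in> XLn_verts V eps m \<and> h' \<circ> zigzag m = h \<circ> zigzag n"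
  unfolding XL_class_def using XL_rel_iff by fastforce

lemma XL_path_XL_class:
  assumes h: "h \<in> XLn_verts V eps n"
  shows "XL_path (XL_class V eps n h) = h \<circ> zigzag n"
proof -
  have ex: "\<exists>p. p \<in> XL_class V eps n h" using mem_XL_class[OF h, of n h] h by blast
  obtain m h' where p: "(SOME p. p \<in> XL_class V eps n h) = (m,h')" by fastforce
  have "(m,h') \<in> XL_class V eps n h" using someI_ex[OF ex] p by simp
  then have "h' \<circ> zigzag m = h \<circ> zigzag n" using mem_XL_class[OF h] by blast
  then show ?thesis unfolding XL_path_def p by simp
qed

lemma XL_verts_iff: "A \<in> XL_verts V eps \<longleftrightarrow> (\<exists>n h. h \<in> XLn_verts V eps n \<and> A = XL_class V eps n h)"
  by (auto simp: XL_verts_def quotient_def XL_class_def)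

lemma XL_class_eq_iff:
  assumes "h \<in> XLn_verts V eps n" "h' \<in> XLn_verts V eps m"
  shows "XL_class V eps n h = XL_class V eps m h' \<longleftrightarrow> h \<circ> zigzag n = h' \<circ> zigzag m"
proof
  assume "XL_class V eps n h = XL_class V eps m h'"
  then show "h \<circ> zigzag n = h' \<circ> zigzag m"
    using XL_path_XL_class[OF assms(1)] XL_path_XL_class[OF assms(2)] by simp
next
  assume e: "h \<circ> zigzag n = h' \<circ> zigzag m"
  show "XL_class V eps n h = XL_class V eps m h'"
  proof (rule set_eqI)
    fix p :: "nat \<times> (int \<Rightarrow> 'a)"
    obtain k g where p: "p = (k,g)" by fastforce
    show "p \<in> XL_class V eps n h \<longleftrightarrow> p \<in> XL_class V eps m h'"
      unfolding p using mem_XL_class[OF assms(1)] mem_XL_class[OF assms(2)] e by simp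
  qed
qed

lemma XL_path_inject:
  assumes "A \<in> XL_verts V eps" "B \<in> XL_verts V eps"
  shows "A = B \<longleftrightarrow> XL_path A = XL_path B"
proof -
  obtain n h where A: "h \<in> XLn_verts V eps n" "A = XL_class V eps n h" using assms(1) XL_verts_iff by blast
  obtain m h' where B: "h' \<in> XLn_verts V eps m" "B = XL_class V eps m h'" using assms(2) XL_verts_iff by blast
  show ?thesis using XL_class_eq_iff[OF A(1) B(1)] XL_path_XL_class[OF A(1)] XL_path_XL_class[OF B(1)] A(2) B(2) by simp
qed

lemma XL_path_vertex:
  assumes "A \<in> XL_verts V eps"
  shows "XL_path A s \<in> V \<and> eps (XL_path A s) = s mod 2"
proof -
  obtain n h where A: "h \<in> XLn_verts V eps n" "A = XL_class V eps n h"
    using assms XL_verts_iff by blast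
  have "h (zigzag n s) \<in> V \<and> eps (h (zigzag n s)) = zigzag n s mod 2"
    using A(1) zigzag_in_stage[of n s] by (simp add: XLn_verts_iff)
  then show ?thesis using XL_path_XL_class[OF A(1)] A(2) zigzag_mod_2 by simp
qed

lemma restrict_XL_path_in_stage:
  assumes "A \<in> XL_verts V eps"
  shows "restrict (XL_path A) (L_stage k) \<in> XLn_verts V eps k"
  using XL_path_vertex[OF assms] by (simp add: XLn_verts_iff)

lemma XL_truncate_in_XL_verts:
  assumes "A \<in> XL_verts V eps"
  shows "XL_truncate V eps k A \<in> XL_verts V eps"
  unfolding XL_truncate_def using restrict_XL_path_in_stage[OF assms] XL_verts_iff by blast

lemma XL_path_XL_truncate:
  assumes "A \<in> XL_verts V eps"
  shows "XL_path (XL_truncate V eps k A) = XL_path A \<circ> zigzag k"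
  unfolding XL_truncate_def
  using XL_path_XL_class[OF restrict_XL_path_in_stage[OF assms]] zigzag_in_stage by (auto simp: fun_eq_iff)

lemma XL_truncate_stable:
  assumes A: "h \<in> XLn_verts V eps n" "A = XL_class V eps n h" and k: "n \<le> k"
  shows "XL_truncate V eps k A = A"
proof -
  have AX: "A \<in> XL_verts V eps" using A XL_verts_iff by blast
  have "XL_path A \<circ> zigzag k = XL_path A"
    using XL_path_XL_class[OF A(1)] A(2) zigzag_zigzag[OF k] by (auto simp: fun_eq_iff)
  then show ?thesis
    using XL_path_inject[OF XL_truncate_in_XL_verts[OF AX] AX] XL_path_XL_truncate[OF AX] by simp
qed

lemma XL_edgeD:
  assumes "(A,B) \<in> XL_edges V E eps" and st: "\<bar>s - t\<bar> = 1"
  shows "(XL_path A s, XL_path B t) \<in> E"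
proof -
  obtain n h h' where AX: "A \<in> XL_verts V eps" and BX: "B \<in> XL_verts V eps"
    and hh: "(n,h) \<in> A" "(n,h') \<in> B" "(h,h') \<in> XLn_edges V E eps n"
    using assms(1) unfolding XL_edges_def by blast
  obtain m1 g1 where A: "g1 \<in> XLn_verts V eps m1" "A = XL_class V eps m1 g1" using AX XL_verts_iff by blast
  obtain m2 g2 where B: "g2 \<in> XLn_verts V eps m2" "B = XL_class V eps m2 g2" using BX XL_verts_iff by blast
  have "XL_path A = h \<circ> zigzag n" using hh(1) A mem_XL_class[OF A(1)] XL_path_XL_class[OF A(1)] by simp
  moreover have "XL_path B = h' \<circ> zigzag n" using hh(2) B mem_XL_class[OF B(1)] XL_path_XL_class[OF B(1)] by simp
  moreover have "(zigzag n s, zigzag n t) \<in> L_edges (- int n) (int n + 1)"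
    using zigzag_in_stage[of n s] zigzag_in_stage[of n t] zigzag_adjacent[OF st, of n]
    by (simp add: L_edges_def L_verts_def)
  ultimately show ?thesis
    using hh(3) by (auto simp: XLn_edges_def hom_edges_def)
qed

lemma XL_edgeI:
  assumes AX: "A \<in> XL_verts V eps" and BX: "B \<in> XL_verts V eps"
    and adj: "\<And>s t. \<bar>s - t\<bar> = 1 \<Longrightarrow> (XL_path A s, XL_path B t) \<in> E"
  shows "(A,B) \<in> XL_edges V E eps"
proof -
  obtain m1 g1 where A: "g1 \<in> XLn_verts V eps m1" "A = XL_class V eps m1 g1" using AX XL_verts_iff by blast
  obtain m2 g2 where B: "g2 \<in> XLn_verts V eps m2" "B = XL_class V eps m2 g2" using BX XL_verts_iff by blast
  define k where "k = max m1 m2"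
  have k: "m1 \<le> k" "m2 \<le> k" by (auto simp: k_def)
  define a where "a = restrict (XL_path A) (L_stage k)"
  define b where "b = restrict (XL_path B) (L_stage k)"
  have aW: "a \<in> XLn_verts V eps k" and bW: "b \<in> XLn_verts V eps k"
    unfolding a_def b_def using restrict_XL_path_in_stage AX BX by blast+
  have "XL_class V eps k a = A" "XL_class V eps k b = B"
    using XL_truncate_stable[OF A k(1)] XL_truncate_stable[OF B k(2)]
    by (simp_all only: XL_truncate_def a_def b_def)
  then have "(k,a) \<in> A" "(k,b) \<in> B"
    using mem_XL_class[OF aW] aW mem_XL_class[OF bW] bW by blast+
  moreover have "(a,b) \<in> XLn_edges V E eps k"
    unfolding XLn_edges_def hom_edges_def using aW bW adj
    by (auto simp: XLn_verts_def L_edges_def a_def b_def L_verts_def)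
  ultimately show ?thesis
    unfolding XL_edges_def using AX BX by blast
qed

section \<open>Clique posets\<close>

lemma XL_truncate_eventually_id:
  assumes "A \<in> XL_verts V eps"
  shows "eventually (\<lambda>N. XL_truncate V eps N A = A) sequentially"
proof -
  obtain n h where "h \<in> XLn_verts V eps n" "A = XL_class V eps n h"
    using assms XL_verts_iff by blast
  then show ?thesis
    unfolding eventually_sequentially using XL_truncate_stable by blast
qed

lemma XL_incl_XL_base: "XL_incl V eps (XL_base A) = XL_truncate V eps 0 A"
  by (simp add: XL_incl_eq_XL_class XL_base_def XL_truncate_def)

lemma XL_cliques_iff:
  "\<tau> \<in> cliques (XL_verts V eps) (XL_edges V E eps) \<longleftrightarrow> finite \<tau> \<and> \<tau> \<noteq> {} \<and> \<tau> \<subseteq> XL_verts V eps \<and>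
     (\<forall>A\<in>\<tau>. \<forall>B\<in>\<tau>. \<forall>s t. \<bar>s - t\<bar> = 1 \<longrightarrow> (XL_path A s, XL_path B t) \<in> E)"
proof -
  have "(A,B) \<in> XL_edges V E eps \<longleftrightarrow> A \<in> XL_verts V eps \<and> B \<in> XL_verts V eps \<and>
      (\<forall>s t. \<bar>s - t\<bar> = 1 \<longrightarrow> (XL_path A s, XL_path B t) \<in> E)" for A B
  proof
    assume e: "(A,B) \<in> XL_edges V E eps"
    then have "A \<in> XL_verts V eps" "B \<in> XL_verts V eps" by (simp_all add: XL_edges_def)
    with XL_edgeD[OF e] show "A \<in> XL_verts V eps \<and> B \<in> XL_verts V eps \<and>
        (\<forall>s t. \<bar>s - t\<bar> = 1 \<longrightarrow> (XL_path A s, XL_path B t) \<in> E)" by blast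
  next
    assume "A \<in> XL_verts V eps \<and> B \<in> XL_verts V eps \<and> (\<forall>s t. \<bar>s - t\<bar> = 1 \<longrightarrow> (XL_path A s, XL_path B t) \<in> E)"
    then show "(A,B) \<in> XL_edges V E eps" by (intro XL_edgeI) auto
  qed
  then show ?thesis
    unfolding cliques_def by blast
qed

lemma XLn_0_cliques_iff:
  "\<sigma> \<in> cliques (XLn_verts V eps 0) (XLn_edges V E eps 0) \<longleftrightarrow> finite \<sigma> \<and> \<sigma> \<noteq> {} \<and> \<sigma> \<subseteq> XLn_verts V eps 0 \<and>
     (\<forall>h\<in>\<sigma>. \<forall>h'\<in>\<sigma>. (h 0, h' 1) \<in> E \<and> (h 1, h' 0) \<in> E)"
proof -
  have "L_edges (- int 0) (int 0 + 1) = {(0,1),(1,0)}"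
    by (auto simp: L_edges_def)
  then have "(h,h') \<in> XLn_edges V E eps 0 \<longleftrightarrow>
      h \<in> XLn_verts V eps 0 \<and> h' \<in> XLn_verts V eps 0 \<and> (h 0, h' 1) \<in> E \<and> (h 1, h' 0) \<in> E" for h h'
    unfolding XLn_edges_def hom_edges_def XLn_verts_def by auto
  then show ?thesis unfolding cliques_def by blast
qed

lemma XL_incl_image_clique:
  assumes "\<sigma> \<in> cliques (XLn_verts V eps 0) (XLn_edges V E eps 0)"
  shows "XL_incl V eps ` \<sigma> \<in> cliques (XL_verts V eps) (XL_edges V E eps)"
proof -
  have \<sigma>: "finite \<sigma>" "\<sigma> \<noteq> {}" "\<sigma> \<subseteq> XLn_verts V eps 0" "\<forall>h\<in>\<sigma>. \<forall>h'\<in>\<sigma>. (h 0, h' 1) \<in> E \<and> (h 1, h' 0) \<in> E"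
    using assms unfolding XLn_0_cliques_iff by blast+
  have "(XL_path (XL_class V eps 0 h) s, XL_path (XL_class V eps 0 h') t) \<in> E"
    if "h \<in> \<sigma>" "h' \<in> \<sigma>" "\<bar>s - t\<bar> = 1" for h h' s t
  proof -
    have "(zigzag 0 s = 0 \<and> zigzag 0 t = 1) \<or> (zigzag 0 s = 1 \<and> zigzag 0 t = 0)"
      using zigzag_adjacent[OF that(3), of 0] zigzag_bounds[of 0 s] zigzag_bounds[of 0 t] by auto
    moreover have "h \<in> XLn_verts V eps 0" "h' \<in> XLn_verts V eps 0"
      using \<sigma>(3) that(1,2) by auto
    ultimately show ?thesis
      using \<sigma>(4) that(1,2) by (auto simp: XL_path_XL_class)
  qed
  moreover have "XL_class V eps 0 ` \<sigma> \<subseteq> XL_verts V eps"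
    using \<sigma>(3) XL_verts_iff by blast
  ultimately show ?thesis
    unfolding XL_cliques_iff XL_incl_eq_XL_class using \<sigma>(1,2) by blast
qed

lemma XL_base_image_clique:
  assumes "\<tau> \<in> cliques (XL_verts V eps) (XL_edges V E eps)"
  shows "XL_base ` \<tau> \<in> cliques (XLn_verts V eps 0) (XLn_edges V E eps 0)"
proof -
  have \<tau>: "finite \<tau>" "\<tau> \<noteq> {}" "\<tau> \<subseteq> XL_verts V eps"
    "\<forall>A\<in>\<tau>. \<forall>B\<in>\<tau>. \<forall>s t. \<bar>s - t\<bar> = 1 \<longrightarrow> (XL_path A s, XL_path B t) \<in> E"
    using assms unfolding XL_cliques_iff by blast+
  have "XL_base ` \<tau> \<subseteq> XLn_verts V eps 0"
    unfolding XL_base_def using restrict_XL_path_in_stage \<tau>(3) by blast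
  moreover have "(XL_base A 0, XL_base B 1) \<in> E \<and> (XL_base A 1, XL_base B 0) \<in> E" if "A \<in> \<tau>" "B \<in> \<tau>" for A B
    using \<tau>(4) that by (simp add: XL_base_def L_verts_def)
  ultimately show ?thesis
    unfolding XLn_0_cliques_iff using \<tau>(1,2) by blast
qed

lemma XL_base_XL_incl:
  assumes "h \<in> XLn_verts V eps 0"
  shows "XL_base (XL_incl V eps h) = h"
proof (rule extensionalityI)
  show "XL_base (XL_incl V eps h) \<in> extensional (L_stage 0)" "h \<in> extensional (L_stage 0)"
    using assms by (simp_all add: XL_base_def XLn_verts_iff)
  fix s assume "s \<in> L_stage 0"
  then show "XL_base (XL_incl V eps h) s = h s"
    using XL_path_XL_class[OF assms] zigzag_id[of 0 s] by (simp add: XL_base_def XL_incl_eq_XL_class L_verts_def)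
qed

lemma XL_base_image_XL_incl_image:
  assumes "\<sigma> \<in> cliques (XLn_verts V eps 0) (XLn_edges V E eps 0)"
  shows "XL_base ` XL_incl V eps ` \<sigma> = \<sigma>"
proof -
  have "\<sigma> \<subseteq> XLn_verts V eps 0" using assms by (simp add: cliques_def)
  then have "(\<lambda>h. XL_base (XL_incl V eps h)) ` \<sigma> = id ` \<sigma>"
    using XL_base_XL_incl by (intro image_cong) auto
  then show ?thesis by (simp add: image_image)
qed

lemma XL_truncate_images_clique:
  assumes \<tau>: "\<tau> \<in> cliques (XL_verts V eps) (XL_edges V E eps)" and mn: "m \<le> Suc n" "n \<le> Suc m"
  shows "XL_truncate V eps m ` \<tau> \<union> XL_truncate V eps n ` \<tau> \<in> cliques (XL_verts V eps) (XL_edges V E eps)"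
proof -
  have \<tau>': "finite \<tau>" "\<tau> \<noteq> {}" "\<tau> \<subseteq> XL_verts V eps"
    "\<forall>A\<in>\<tau>. \<forall>B\<in>\<tau>. \<forall>s t. \<bar>s - t\<bar> = 1 \<longrightarrow> (XL_path A s, XL_path B t) \<in> E"
    using \<tau> unfolding XL_cliques_iff by blast+
  have adj: "(XL_path (XL_truncate V eps i A) s, XL_path (XL_truncate V eps j B) t) \<in> E"
    if "i \<in> {m,n}" "j \<in> {m,n}" "A \<in> \<tau>" "B \<in> \<tau>" "\<bar>s - t\<bar> = 1" for i j A B s t
  proof -
    have "\<bar>zigzag i s - zigzag j t\<bar> = 1"
      using zigzag_adjacent_stages[OF that(5)] that(1,2) mn by auto
    moreover have "A \<in> XL_verts V eps" "B \<in> XL_verts V eps"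
      using \<tau>'(3) that(3,4) by auto
    ultimately show ?thesis
      using \<tau>'(4) that(3,4) by (simp add: XL_path_XL_truncate)
  qed
  have "XL_truncate V eps i ` \<tau> \<subseteq> XL_verts V eps" for i
    using \<tau>'(3) XL_truncate_in_XL_verts by blast
  then show ?thesis
    unfolding XL_cliques_iff using \<tau>'(1,2) adj by blast
qed

lemma XL_truncate_images_eventually_id:
  assumes "S \<in> order_complex (cliques (XL_verts V eps) (XL_edges V E eps)) (\<subseteq>)"
  shows "\<exists>N0. \<forall>N\<ge>N0. \<forall>\<tau>\<in>S. XL_truncate V eps N ` \<tau> = \<tau>"
proof -
  have fin: "finite (\<Union>S)" and "\<Union>S \<subseteq> XL_verts V eps"
    using assms unfolding order_complex_def cliques_def by auto
  then have "\<forall>A\<in>\<Union>S. eventually (\<lambda>N. XL_truncate V eps N A = A) sequentially"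
    using XL_truncate_eventually_id by blast
  then have "eventually (\<lambda>N. \<forall>A\<in>\<Union>S. XL_truncate V eps N A = A) sequentially"
    by (rule eventually_ball_finite[OF fin])
  then obtain N0 where "\<forall>N\<ge>N0. \<forall>A\<in>\<Union>S. XL_truncate V eps N A = A"
    unfolding eventually_sequentially by blast
  then have "\<forall>N\<ge>N0. \<forall>\<tau>\<in>S. XL_truncate V eps N ` \<tau> = \<tau>"
    by (metis (no_types, lifting) Union_iff image_cong image_ident)
  then show ?thesis by blast
qed

theorem lemma5p1:
  fixes V :: "'a set" and E :: "('a \<times> 'a) set" and eps :: "'a \<Rightarrow> int"
  assumes "is_bigraph V E eps"
  shows "homotopy_equivalence_map
           (poset_real (cliques (XLn_verts V eps 0) (XLn_edges V E eps 0)) (\<subseteq>))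
           (poset_real (cliques (XL_verts V eps) (XL_edges V E eps)) (\<subseteq>))
           (real_map (\<lambda>\<sigma>. XL_incl V eps ` \<sigma>))"
proof -
  let ?P = "cliques (XLn_verts V eps 0) (XLn_edges V E eps 0)" and ?Q = "cliques (XL_verts V eps) (XL_edges V E eps)"
  let ?\<phi> = "\<lambda>\<sigma>. XL_incl V eps ` \<sigma>" and ?\<psi> = "\<lambda>\<tau>. XL_base ` \<tau>" and ?c = "\<lambda>N \<tau>. XL_truncate V eps N ` \<tau>"
  have \<phi>: "continuous_map (poset_real ?P (\<subseteq>)) (poset_real ?Q (\<subseteq>)) (real_map ?\<phi>)"
    by (rule continuous_map_real_map) (auto simp: XL_incl_image_clique)
  have \<psi>: "continuous_map (poset_real ?Q (\<subseteq>)) (poset_real ?P (\<subseteq>)) (real_map ?\<psi>)"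
    by (rule continuous_map_real_map) (auto simp: XL_base_image_clique)
  have "real_map ?\<psi> (real_map ?\<phi> t) = real_map id t" if "t \<in> topspace (poset_real ?P (\<subseteq>))" for t
    by (rule real_map_compose_on_poset_real[OF that]) (simp add: XL_base_image_XL_incl_image)
  then have \<psi>\<phi>: "homotopic_with (\<lambda>_. True) (poset_real ?P (\<subseteq>)) (poset_real ?P (\<subseteq>)) (real_map ?\<psi> \<circ> real_map ?\<phi>) id"
    by (intro homotopic_with_equal continuous_map_compose[OF \<phi> \<psi>]) auto
  have "\<tau> \<in> ?Q \<Longrightarrow> ?c N \<tau> \<in> ?Q" "\<tau> \<in> ?Q \<Longrightarrow> ?c N \<tau> \<union> ?c (Suc N) \<tau> \<in> ?Q" for N \<tau>
    using XL_truncate_images_clique[of \<tau> V eps E N N] XL_truncate_images_clique[of \<tau> V eps E N "Suc N"] by auto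
  then have c0: "homotopic_with (\<lambda>_. True) (poset_real ?Q (\<subseteq>)) (poset_real ?Q (\<subseteq>)) (real_map (?c 0)) id"
    using XL_truncate_images_eventually_id by (intro homotopic_real_map_eventually_id) auto
  have "real_map ?\<phi> (real_map ?\<psi> t) = real_map (?c 0) t" if "t \<in> topspace (poset_real ?Q (\<subseteq>))" for t
    using real_map_compose_on_poset_real[OF that, of ?\<phi> ?\<psi> "?c 0"] by (simp add: image_image XL_incl_XL_base)
  then have \<phi>\<psi>: "homotopic_with (\<lambda>_. True) (poset_real ?Q (\<subseteq>)) (poset_real ?Q (\<subseteq>)) (real_map ?\<phi> \<circ> real_map ?\<psi>) id"
    by (intro homotopic_with_eq[OF c0]) auto
  show ?thesis
    unfolding homotopy_equivalence_map_def using \<phi> \<psi> \<psi>\<phi> \<phi>\<psi> by blast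
qed

end
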